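(* Let $T$ be a tree on $n\ge4$ vertices, and let $c_0$ denote the largest positive root of the equation $$-c^3-\left(\frac{n^2-10n}{3}\right)c^2-(2n^2+n)c+\frac{4n^3-5n^2+4n}{3}=0.$$ Assume the diameter of $T$ is at least $c_0$. Let $G$ be a graph constructed from $T$ by adding an edge between two non-adjacent vertices so as to create a cycle of length $c>c_0$. Then $\mathcal{K}(G)<\mathcal{K}(T)$.
   Context: Kemeny's constant: for a connected graph $H$ with adjacency matrix $A$ and diagonal degree matrix $\Delta$, consider the random walk with transition matrix $\Delta^{-1}A$, its stationary distribution $w=(w_k)$ and mean first passage times $m_{j,k}$; then $\mathcal{K}(H)=\sum_{k\neq j} m_{j,k}w_k$, which is independent of $j$. *)

theory Defs
  imports Complex_Main
begin

definition simple_graph :: "'a set \<Rightarrow> 'a set set \<Rightarrow> bool" where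
  "simple_graph V E \<longleftrightarrow> finite V \<and>
     (\<forall>e\<in>E. \<exists>u v. u \<in> V \<and> v \<in> V \<and> u \<noteq> v \<and> e = {u, v})"

definition adj :: "'a set set \<Rightarrow> 'a \<Rightarrow> 'a \<Rightarrow> bool" where
  "adj E u v \<longleftrightarrow> {u, v} \<in> E"

definition walk :: "'a set set \<Rightarrow> 'a list \<Rightarrow> bool" where
  "walk E xs \<longleftrightarrow> xs \<noteq> [] \<and> (\<forall>i. i + 1 < length xs \<longrightarrow> adj E (xs ! i) (xs ! (i + 1)))"

definition connected_graph :: "'a set \<Rightarrow> 'a set set \<Rightarrow> bool" where
  "connected_graph V E \<longleftrightarrow> V \<noteq> {} \<and> (\<forall>u\<in>V. \<forall>v\<in>V. \<exists>xs. walk E xs \<and> set xs \<subseteq> V \<and> hd xs = u \<and> last xs = v)"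

definition is_cycle :: "'a set set \<Rightarrow> 'a list \<Rightarrow> bool" where
  "is_cycle E xs \<longleftrightarrow> length xs \<ge> 3 \<and> distinct xs \<and>
     (\<forall>i < length xs. adj E (xs ! i) (xs ! ((i + 1) mod length xs)))"

definition is_tree :: "'a set \<Rightarrow> 'a set set \<Rightarrow> bool" where
  "is_tree V E \<longleftrightarrow> simple_graph V E \<and> connected_graph V E \<and>
     \<not> (\<exists>xs. set xs \<subseteq> V \<and> is_cycle E xs)"

definition graph_dist :: "'a set set \<Rightarrow> 'a \<Rightarrow> 'a \<Rightarrow> nat" where
  "graph_dist E u v = (LEAST k. \<exists>xs. walk E xs \<and> hd xs = u \<and> last xs = v \<and> length xs = k + 1)"

definition diameter :: "'a set \<Rightarrow> 'a set set \<Rightarrow> nat" where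
  "diameter V E = Max {graph_dist E u v | u v. u \<in> V \<and> v \<in> V}"

definition degree :: "'a set set \<Rightarrow> 'a \<Rightarrow> nat" where
  "degree E v = card {u. adj E v u}"

definition adj_mat :: "'a set set \<Rightarrow> 'a \<Rightarrow> 'a \<Rightarrow> real" where
  "adj_mat E j k = (if adj E j k then 1 else 0)"

definition trans_mat :: "'a set set \<Rightarrow> 'a \<Rightarrow> 'a \<Rightarrow> real" where
  "trans_mat E j k = adj_mat E j k / real (degree E j)"

text \<open>Stationary distribution (unique for connected graphs).\<close>
definition stationary :: "'a set \<Rightarrow> 'a set set \<Rightarrow> 'a \<Rightarrow> real" where
  "stationary V E = (THE w. (\<forall>k\<in>V. w k \<ge> 0) \<and> (\<forall>k. k \<notin> V \<longrightarrow> w k = 0) \<and>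
      sum w V = 1 \<and> (\<forall>k\<in>V. (\<Sum>j\<in>V. w j * trans_mat E j k) = w k))"

primrec first_passage :: "'a set \<Rightarrow> 'a set set \<Rightarrow> nat \<Rightarrow> 'a \<Rightarrow> 'a \<Rightarrow> real" where
  "first_passage V E 0 j k = 0"
| "first_passage V E (Suc t) j k =
     (if t = 0 then trans_mat E j k
      else (\<Sum>l\<in>V - {k}. trans_mat E j l * first_passage V E t l k))"

definition mfpt :: "'a set \<Rightarrow> 'a set set \<Rightarrow> 'a \<Rightarrow> 'a \<Rightarrow> real" where
  "mfpt V E j k = (\<Sum>t. real t * first_passage V E t j k)"

text \<open>Kemeny's constant, evaluated at an (arbitrary) base vertex j; it is independent of j.\<close>
definition kemeny :: "'a set \<Rightarrow> 'a set set \<Rightarrow> real" where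
  "kemeny V E = (let j = (SOME j. j \<in> V) in
     (\<Sum>k\<in>V - {j}. mfpt V E j k * stationary V E k))"

definition cubic_c0 :: "nat \<Rightarrow> real" where
  "cubic_c0 n = Max {x::real. x > 0 \<and>
     - (x ^ 3) - ((real n^2 - 10 * real n) / 3) * x ^ 2 - (2 * real n^2 + real n) * x
     + (4 * real n^3 - 5 * real n^2 + 4 * real n) / 3 = 0}"

end

(* Kemeny's constant of a connected graph with degrees d and effective resistance R is
   (1 / 4m) * (SUM k l. d k * d l * R k l), as one sees by solving the hitting-time equations with
   R: for each l, (A - D) R(-, l) = 2 e_l - alpha with alpha independent of l.  For the
   tree T this R is the distance; for G = T + uv it is dist x y - (phi x - phi y)^2 / c, where c is
   the cycle length and phi x = (dist x v - dist x u) / 2.  Comparing the two formulas, the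
   difference is controlled by a lower bound for the Wiener index of T in terms of the heights of
   the vertices above the u-v path (these heights take all values up to their maximum, which caps
   how many vertices share a height) and by a lower bound for the degree-weighted variance of phi,
   which is large along the path.  What remains is the cubic of the statement evaluated at c. *)

theory Submission
  imports Defs
begin

lemma adj_commute: "adj E u v \<longleftrightarrow> adj E v u"
  by (simp add: adj_def insert_commute)

definition neighbours :: "'a set set \<Rightarrow> 'a \<Rightarrow> 'a set" where
  "neighbours E x = {y. adj E x y}"

lemma degree_eq_card_neighbours: "degree E x = card (neighbours E x)"
  by (simp add: degree_def neighbours_def)

lemma walk_singleton [simp]: "walk E [x]"
  by (simp add: walk_def)

lemma not_walk_Nil [simp]: "\<not> walk E []"
  by (simp add: walk_def)

lemma walk_Cons_iff: "walk E (x # xs) \<longleftrightarrow> xs = [] \<or> adj E x (hd xs) \<and> walk E xs"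
proof (cases xs)
  case (Cons y ys)
  have "walk E (x # y # ys) \<longleftrightarrow> adj E x y \<and> walk E (y # ys)"
    unfolding walk_def by (auto simp: nth_Cons split: nat.splits)
  then show ?thesis using Cons by simp
qed simp

lemma walk_append:
  "walk E xs \<Longrightarrow> walk E ys \<Longrightarrow> adj E (last xs) (hd ys) \<Longrightarrow> walk E (xs @ ys)"
  by (induction xs rule: induct_list012) (auto simp: walk_Cons_iff)

lemma walk_rev: "walk E xs \<Longrightarrow> walk E (rev xs)"
proof (induction xs rule: induct_list012)
  case (3 x y zs)
  then have "walk E (rev (y # zs))" "adj E (last (rev (y # zs))) x"
    by (auto simp: walk_Cons_iff adj_commute)
  then show ?case
    using walk_append[of E "rev (y # zs)" "[x]"] by simp
qed simp_all

lemma walk_take: "walk E xs \<Longrightarrow> 0 < n \<Longrightarrow> walk E (take n xs)"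
  unfolding walk_def by auto

lemma walk_drop: "walk E xs \<Longrightarrow> n < length xs \<Longrightarrow> walk E (drop n xs)"
  unfolding walk_def by auto

lemma walk_join: "walk E xs \<Longrightarrow> walk E ys \<Longrightarrow> last xs = hd ys \<Longrightarrow> walk E (xs @ tl ys)"
  by (cases ys) (auto simp: walk_Cons_iff intro: walk_append)

lemma walk_last_in_closed:
  assumes "walk E xs" "hd xs \<in> S" "\<And>a b. a \<in> S \<Longrightarrow> adj E a b \<Longrightarrow> b \<in> S"
  shows "last xs \<in> S"
  using assms by (induction xs) (auto simp: walk_Cons_iff)

lemma is_cycleI:
  assumes "walk E xs" "distinct xs" "length xs \<ge> 3" "adj E (last xs) (hd xs)"
  shows "is_cycle E xs"
  unfolding is_cycle_def
proof (intro conjI allI impI)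
  fix i assume i: "i < length xs"
  show "adj E (xs ! i) (xs ! ((i + 1) mod length xs))"
  proof (cases "i + 1 < length xs")
    case True
    then show ?thesis using assms(1) by (simp add: walk_def)
  next
    case False
    then have "length xs = i + 1" using i by simp
    moreover have "xs \<noteq> []" using i by auto
    ultimately have "last xs = xs ! i" "hd xs = xs ! 0" "(i + 1) mod length xs = 0"
      by (auto simp: last_conv_nth hd_conv_nth)
    then show ?thesis using assms(4) by simp
  qed
qed (use assms in auto)

lemma first_common_element:
  assumes "x \<in> set xs" "x \<in> set ys"
  obtains i j where "i < length xs" "j < length ys" "xs ! i = ys ! j" "set (take i xs) \<inter> set ys = {}"
proof -
  have ex: "\<exists>i. i < length xs \<and> xs ! i \<in> set ys" using assms by (auto simp: in_set_conv_nth)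
  define i where "i = (LEAST i. i < length xs \<and> xs ! i \<in> set ys)"
  have i: "i < length xs" "xs ! i \<in> set ys" using LeastI_ex[OF ex] unfolding i_def by auto
  have "xs ! i' \<notin> set ys" if "i' < i" for i'
    using not_less_Least[of i' "\<lambda>i. i < length xs \<and> xs ! i \<in> set ys"] that i(1)
    unfolding i_def by auto
  then have "set (take i xs) \<inter> set ys = {}" using i(1) by (auto simp: in_set_conv_nth)
  moreover obtain j where "j < length ys" "ys ! j = xs ! i" using i(2) by (auto simp: in_set_conv_nth)
  ultimately show ?thesis using that i(1) by auto
qed

lemma converging_paths_cycle:
  assumes w1: "walk E p1" and w2: "walk E p2" and d1: "distinct p1" and d2: "distinct p2"
    and l: "last p1 = last p2" and a: "adj E (hd p2) (hd p1)" and h: "hd p1 \<notin> set p2"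
    and n1: "\<not> (1 < length p1 \<and> p1 ! 1 = hd p2)"
  shows "\<exists>cyc. set cyc \<subseteq> set p1 \<union> set p2 \<and> is_cycle E cyc"
proof -
  have ne1: "p1 \<noteq> []" and ne2: "p2 \<noteq> []" using w1 w2 by auto
  obtain i j where i: "i < length p1" and j: "j < length p2" and ij: "p2 ! j = p1 ! i"
    and before_i: "set (take i p1) \<inter> set p2 = {}"
    using first_common_element[of "last p1" p1 p2] ne1 ne2 l by (metis last_in_set)
  have i0: "i \<noteq> 0" using h ij j ne1 nth_mem[OF j] by (cases i) (auto simp: hd_conv_nth)
  define cyc where "cyc = take (Suc i) p1 @ rev (take j p2)"
  have "set cyc \<subseteq> set p1 \<union> set p2" unfolding cyc_def
    using set_take_subset[of "Suc i" p1] set_take_subset[of j p2] by auto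
  moreover have "is_cycle E cyc"
  proof (rule is_cycleI)
    have "p1 ! i \<notin> set (take j p2)"
      using ij j nth_eq_iff_index_eq[OF d2] by (auto simp: in_set_conv_nth) (metis less_trans less_irrefl)
    then have "set (take (Suc i) p1) \<inter> set (take j p2) = {}"
      using before_i set_take_subset[of j p2] i by (auto simp: take_Suc_conv_app_nth)
    then show "distinct cyc" unfolding cyc_def using d1 d2 by auto
    have "\<not> (i = 1 \<and> j = 0)" using n1 i ij ne2 by (cases j) (auto simp: hd_conv_nth)
    then show "3 \<le> length cyc" unfolding cyc_def using i j i0 by auto
    have lt: "last (take (Suc i) p1) = p1 ! i" using i by (simp add: take_Suc_conv_app_nth)
    show "walk E cyc"
    proof (cases "j = 0")
      case True then show ?thesis unfolding cyc_def using walk_take[OF w1] by simp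
    next
      case False
      have "adj E (p2 ! (j - 1)) (p2 ! j)" using w2 j False unfolding walk_def
        by (metis Suc_diff_1 Suc_eq_plus1 bot_nat_0.not_eq_extremum)
      moreover have "last (take j p2) = p2 ! (j - 1)" using j False
        by (cases j) (auto simp: take_Suc_conv_app_nth)
      ultimately have "adj E (last (take (Suc i) p1)) (hd (rev (take j p2)))"
        using lt ij by (simp add: hd_rev adj_commute)
      then show ?thesis unfolding cyc_def using False
        by (intro walk_append walk_take[OF w1] walk_rev walk_take[OF w2]) auto
    qed
    have "last cyc = hd p2"
      unfolding cyc_def using lt j ij ne2 by (cases "j = 0") (auto simp: hd_conv_nth last_rev)
    then show "adj E (last cyc) (hd cyc)" unfolding cyc_def using a ne1 by simp
  qed
  ultimately show ?thesis by blast
qed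

lemma is_cycle_imp_walk: "is_cycle E xs \<Longrightarrow> walk E xs"
  unfolding is_cycle_def walk_def by (auto, metis Suc_lessD mod_less)

lemma is_cycle_rotate:
  assumes "is_cycle E xs"
  shows "is_cycle E (rotate m xs)"
  unfolding is_cycle_def
proof (intro conjI allI impI)
  fix i assume i: "i < length (rotate m xs)"
  let ?L = "length xs"
  have L: "0 < ?L" "3 \<le> ?L" using assms by (auto simp: is_cycle_def)
  have "adj E (xs ! ((m + i) mod ?L)) (xs ! (((m + i) mod ?L + 1) mod ?L))"
    using assms L by (simp add: is_cycle_def)
  moreover have "((m + i) mod ?L + 1) mod ?L = (m + (i + 1) mod ?L) mod ?L"
    by (simp add: mod_simps)
  ultimately show "adj E (rotate m xs ! i) (rotate m xs ! ((i + 1) mod length (rotate m xs)))"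
    using i L by (simp add: nth_rotate)
qed (use assms in \<open>auto simp: is_cycle_def\<close>)

lemma is_cycle_rotate_to:
  assumes "is_cycle E xs" "i < length xs"
  shows "\<exists>ys. is_cycle E ys \<and> set ys = set xs \<and> length ys = length xs
    \<and> hd ys = xs ! ((i + 1) mod length xs) \<and> last ys = xs ! i"
proof (intro exI conjI)
  let ?L = "length xs" and ?ys = "rotate (Suc i) xs"
  have L: "0 < ?L" "?L - 1 < ?L" using assms by auto
  have "Suc i + (?L - 1) = i + ?L" using L by simp
  then have L3: "(Suc i + (?L - 1)) mod ?L = i" using assms(2) by simp
  show "is_cycle E ?ys" using is_cycle_rotate[OF assms(1)] .
  show "set ?ys = set xs" "length ?ys = ?L" by simp_all
  show "hd ?ys = xs ! ((i + 1) mod ?L)"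
    using nth_rotate[OF L(1), of "Suc i"] L(1) by (simp add: hd_conv_nth del: rotate_Suc)
  show "last ?ys = xs ! i"
    using nth_rotate[OF L(2), of "Suc i"] L L3 assms(2) by (simp add: last_conv_nth del: rotate_Suc)
qed

lemma is_cycle_open_walk:
  assumes cyc: "is_cycle E xs"
    and E_F: "\<And>a b. adj E a b \<Longrightarrow> {a, b} \<noteq> {hd xs, last xs} \<Longrightarrow> adj F a b"
  shows "walk F xs"
  unfolding walk_def
proof (intro conjI allI impI)
  let ?L = "length xs"
  have L: "3 \<le> ?L" "distinct xs" and ne: "xs \<noteq> []" using cyc by (auto simp: is_cycle_def)
  show "xs \<noteq> []" by (fact ne)
  fix k assume k: "k + 1 < ?L"
  have "adj E (xs ! k) (xs ! (k + 1))" using is_cycle_imp_walk[OF cyc] k unfolding walk_def by blast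
  moreover have "{xs ! k, xs ! (k + 1)} \<noteq> {xs ! 0, xs ! (?L - 1)}"
  proof
    assume "{xs ! k, xs ! (k + 1)} = {xs ! 0, xs ! (?L - 1)}"
    then have "(!) xs ` {k, k + 1} = (!) xs ` {0, ?L - 1}" by simp
    moreover have "inj_on ((!) xs) {..<?L}" using inj_on_nth[OF L(2)] by simp
    ultimately have "{k, k + 1} = {0, ?L - 1}" using k L(1) by (subst (asm) inj_on_image_eq_iff) auto
    then show False using k L(1) by (auto simp: doubleton_eq_iff)
  qed
  ultimately show "adj F (xs ! k) (xs ! (k + 1))"
    using E_F ne by (simp add: hd_conv_nth last_conv_nth)
qed

locale connected_simple_graph =
  fixes V :: "'a set" and E :: "'a set set"
  assumes simple: "simple_graph V E" and connected: "connected_graph V E"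
begin

abbreviation \<delta> :: "'a \<Rightarrow> 'a \<Rightarrow> nat" where "\<delta> \<equiv> graph_dist E"

lemma finite_vertices: "finite V"
  using simple by (simp add: simple_graph_def)

lemma vertices_nonempty: "V \<noteq> {}"
  using connected by (simp add: connected_graph_def)

lemma adjD: "adj E x y \<Longrightarrow> x \<in> V \<and> y \<in> V \<and> x \<noteq> y"
  using simple unfolding simple_graph_def adj_def by (metis doubleton_eq_iff)

lemma neighbours_subset: "neighbours E x \<subseteq> V"
  using adjD by (auto simp: neighbours_def)

lemma finite_neighbours: "finite (neighbours E x)"
  using neighbours_subset finite_vertices finite_subset by blast

lemma sum_neighbours_eq_sum_if:
  "(\<Sum>y\<in>neighbours E x. f y) = (\<Sum>y\<in>V. if adj E x y then f y else 0)"
proof -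
  have "neighbours E x = {y \<in> V. adj E x y}" using adjD by (auto simp: neighbours_def)
  then show ?thesis using finite_vertices by (simp add: sum.inter_filter)
qed

lemma sum_neighbours_swap:
  "(\<Sum>x\<in>V. \<Sum>y\<in>neighbours E x. f x y) = (\<Sum>y\<in>V. \<Sum>x\<in>neighbours E y. f x y)"
  unfolding sum_neighbours_eq_sum_if by (subst sum.swap) (simp add: adj_commute)

lemma walk_subset_vertices: "walk E xs \<Longrightarrow> hd xs \<in> V \<Longrightarrow> set xs \<subseteq> V"
  by (induction xs) (auto simp: walk_Cons_iff dest: adjD)

lemma walk_exists: "a \<in> V \<Longrightarrow> b \<in> V \<Longrightarrow> \<exists>xs. walk E xs \<and> hd xs = a \<and> last xs = b"
  using connected unfolding connected_graph_def by blast

lemma graph_dist_le_walk: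
  assumes "walk E xs" "hd xs = a" "last xs = b"
  shows "\<delta> a b \<le> length xs - 1"
proof -
  have "length xs = (length xs - 1) + 1" using assms(1) by (cases xs) auto
  then show ?thesis unfolding graph_dist_def using assms by (intro Least_le) blast
qed

lemma shortest_walk_exists:
  assumes "a \<in> V" "b \<in> V"
  shows "\<exists>g. walk E g \<and> hd g = a \<and> last g = b \<and> length g = \<delta> a b + 1"
proof -
  obtain xs where xs: "walk E xs" "hd xs = a" "last xs = b" using walk_exists assms by blast
  have "length xs = (length xs - 1) + 1" using xs(1) by (cases xs) auto
  then have "\<exists>k xs. walk E xs \<and> hd xs = a \<and> last xs = b \<and> length xs = k + 1" using xs by blast
  then show ?thesis unfolding graph_dist_def by (rule LeastI_ex)
qed

lemma graph_dist_self [simp]: "\<delta> a a = 0"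
  using graph_dist_le_walk[of "[a]" a a] by simp

lemma graph_dist_eq_0_iff:
  assumes "a \<in> V" "b \<in> V"
  shows "\<delta> a b = 0 \<longleftrightarrow> a = b"
proof
  assume "\<delta> a b = 0"
  moreover obtain g where "walk E g" "hd g = a" "last g = b" "length g = \<delta> a b + 1"
    using shortest_walk_exists assms by blast
  ultimately show "a = b" by (cases g) auto
qed simp

lemma graph_dist_commute:
  assumes "a \<in> V" "b \<in> V"
  shows "\<delta> a b = \<delta> b a"
proof -
  have "\<delta> x y \<le> \<delta> y x" if xy: "x \<in> V" "y \<in> V" for x y
  proof -
    obtain g where g: "walk E g" "hd g = y" "last g = x" "length g = \<delta> y x + 1"
      using shortest_walk_exists xy by blast
    then have "\<delta> x y \<le> length (rev g) - 1"
      by (intro graph_dist_le_walk) (auto simp: walk_rev hd_rev last_rev)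
    then show ?thesis using g by simp
  qed
  then show ?thesis using assms by (simp add: le_antisym)
qed

lemma graph_dist_triangle:
  assumes "a \<in> V" "b \<in> V" "c \<in> V"
  shows "\<delta> a c \<le> \<delta> a b + \<delta> b c"
proof -
  obtain g1 where g1: "walk E g1" "hd g1 = a" "last g1 = b" "length g1 = \<delta> a b + 1"
    using shortest_walk_exists assms by blast
  obtain g2 where g2: "walk E g2" "hd g2 = b" "last g2 = c" "length g2 = \<delta> b c + 1"
    using shortest_walk_exists assms by blast
  have "hd (g1 @ tl g2) = a" using g1 by (cases g1) auto
  moreover have "last (g1 @ tl g2) = c" using g1 g2 by (cases g2) auto
  ultimately have "\<delta> a c \<le> length (g1 @ tl g2) - 1"
    using g1 g2 by (intro graph_dist_le_walk walk_join) auto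
  then show ?thesis using g1 g2 by simp
qed

lemma graph_dist_adj:
  assumes "adj E a b"
  shows "\<delta> a b = 1"
proof -
  have "\<delta> a b \<le> 1" using graph_dist_le_walk[of "[a, b]"] assms by (simp add: walk_Cons_iff)
  moreover have "\<delta> a b \<noteq> 0" using graph_dist_eq_0_iff adjD assms by blast
  ultimately show ?thesis by simp
qed

lemma shortest_walk_nth:
  assumes g: "walk E g" "hd g = a" "last g = b" "length g = \<delta> a b + 1"
    and a: "a \<in> V" and i: "i < length g"
  shows "\<delta> a (g ! i) = i" "\<delta> (g ! i) b = \<delta> a b - i" "g ! i \<in> V"
proof -
  have gV: "set g \<subseteq> V" using walk_subset_vertices g a by blast
  then show giV: "g ! i \<in> V" using i by auto
  have bV: "b \<in> V" using gV g(1,3) by (metis last_in_set not_walk_Nil subsetD)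
  have "hd (take (Suc i) g) = a" using g(1,2) by (cases g) auto
  moreover have "last (take (Suc i) g) = g ! i" using i by (simp add: take_Suc_conv_app_nth)
  ultimately have "\<delta> a (g ! i) \<le> length (take (Suc i) g) - 1"
    using g by (intro graph_dist_le_walk walk_take) auto
  moreover have "\<delta> (g ! i) b \<le> length (drop i g) - 1"
    using g i by (intro graph_dist_le_walk walk_drop) (auto simp: hd_drop_conv_nth)
  moreover have "\<delta> a b \<le> \<delta> a (g ! i) + \<delta> (g ! i) b"
    using graph_dist_triangle a giV bV by blast
  ultimately show "\<delta> a (g ! i) = i" "\<delta> (g ! i) b = \<delta> a b - i" using g(4) i by auto
qed

lemma shortest_walk_distinct:
  assumes "walk E g" "hd g = a" "last g = b" "length g = \<delta> a b + 1" "a \<in> V"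
  shows "distinct g"
  unfolding distinct_conv_nth using shortest_walk_nth(1)[OF assms] by metis

lemma closer_neighbour_exists:
  assumes "a \<in> V" "b \<in> V" "a \<noteq> b"
  shows "\<exists>y. adj E a y \<and> \<delta> y b + 1 = \<delta> a b"
proof -
  obtain g where g: "walk E g" "hd g = a" "last g = b" "length g = \<delta> a b + 1"
    using shortest_walk_exists assms by blast
  have "\<delta> a b \<noteq> 0" using graph_dist_eq_0_iff assms by blast
  then have l: "1 < length g" using g by simp
  then have "adj E a (g ! 1)" using g unfolding walk_def by (auto simp: hd_conv_nth)
  moreover have "\<delta> (g ! 1) b = \<delta> a b - 1" using shortest_walk_nth(2)[OF g assms(1) l] .
  ultimately show ?thesis using \<open>\<delta> a b \<noteq> 0\<close> by (intro exI[of _ "g ! 1"]) auto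
qed

lemma harmonic_imp_constant:
  assumes harmonic: "\<And>k. k \<in> V \<Longrightarrow> (\<Sum>j\<in>neighbours E k. x j) = real (degree E k) * x k"
    and "a \<in> V" "b \<in> V"
  shows "x a = x b"
proof -
  define M where "M = Max (x ` V)"
  have fin: "finite (x ` V)" "x ` V \<noteq> {}" using finite_vertices vertices_nonempty by auto
  have x_le: "x j \<le> M" if "j \<in> V" for j using Max_ge[OF fin(1)] that unfolding M_def by auto
  obtain j0 where j0: "j0 \<in> V" "x j0 = M" using Max_in[OF fin] unfolding M_def by auto
  have closed: "c \<in> {j \<in> V. x j = M}" if a': "a' \<in> {j \<in> V. x j = M}" and "adj E a' c" for a' c
  proof -
    have c: "c \<in> neighbours E a'" "c \<in> V" using \<open>adj E a' c\<close> adjD by (auto simp: neighbours_def)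
    have "(\<Sum>j\<in>neighbours E a'. M - x j) = 0"
      using harmonic[of a'] a' by (simp add: sum_subtractf degree_eq_card_neighbours)
    moreover have "\<forall>j\<in>neighbours E a'. 0 \<le> M - x j" using x_le neighbours_subset by auto
    ultimately have "\<forall>j\<in>neighbours E a'. M - x j = 0"
      by (subst (asm) sum_nonneg_eq_0_iff[OF finite_neighbours]) auto
    then have "M - x c = 0" using c(1) by blast
    then show ?thesis using c(2) by simp
  qed
  have "x y = M" if yV: "y \<in> V" for y
  proof -
    obtain xs where "walk E xs" "hd xs = j0" "last xs = y" using walk_exists[OF j0(1) yV] by blast
    then have "last xs \<in> {j \<in> V. x j = M}"
      using walk_last_in_closed[of E xs "{j \<in> V. x j = M}"] closed j0 by blast
    then show ?thesis using \<open>last xs = y\<close> by simp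
  qed
  then show ?thesis using assms by simp
qed

end

section \<open>Trees\<close>

locale tree = connected_simple_graph +
  assumes acyclic: "\<not> (\<exists>xs. set xs \<subseteq> V \<and> is_cycle E xs)"
begin

lemma no_converging_paths:
  assumes "walk E p1" "walk E p2" "distinct p1" "distinct p2" "last p1 = last p2"
    "adj E (hd p2) (hd p1)" "hd p1 \<notin> set p2" "\<not> (1 < length p1 \<and> p1 ! 1 = hd p2)"
    "hd p1 \<in> V" "hd p2 \<in> V"
  shows False
proof -
  obtain cyc where "set cyc \<subseteq> set p1 \<union> set p2" "is_cycle E cyc"
    using converging_paths_cycle assms by blast
  moreover have "set p1 \<subseteq> V" "set p2 \<subseteq> V" using walk_subset_vertices assms by auto
  ultimately show False using acyclic by blast
qed

lemma shortest_walk_avoids_farther: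
  assumes g: "walk E g" "hd g = a" "last g = b" "length g = \<delta> a b + 1" "a \<in> V"
    and "x \<in> set g" "\<delta> a b \<le> \<delta> x b" "x \<noteq> a"
  shows False
proof -
  obtain i where i: "i < length g" "g ! i = x" using assms(6) by (auto simp: in_set_conv_nth)
  have "i \<noteq> 0" using i g(1,2) assms(8) by (cases g; cases i) auto
  then show False using shortest_walk_nth(2)[OF g i(1)] i assms(7) g(4) by simp
qed

lemma adj_graph_dist_ne:
  assumes a: "adj E x y" and z: "z \<in> V"
  shows "\<delta> x z \<noteq> \<delta> y z"
proof
  assume eq: "\<delta> x z = \<delta> y z"
  have xV: "x \<in> V" and yV: "y \<in> V" and xy: "x \<noteq> y" using adjD a by auto
  obtain p1 where p1: "walk E p1" "hd p1 = x" "last p1 = z" "length p1 = \<delta> x z + 1"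
    using shortest_walk_exists xV z by blast
  obtain p2 where p2: "walk E p2" "hd p2 = y" "last p2 = z" "length p2 = \<delta> y z + 1"
    using shortest_walk_exists yV z by blast
  have yn: "y \<notin> set p1" using shortest_walk_avoids_farther[OF p1 xV, of y] eq xy by auto
  have xn: "x \<notin> set p2" using shortest_walk_avoids_farther[OF p2 yV, of x] eq xy by auto
  show False
  proof (rule no_converging_paths[OF p1(1) p2(1) shortest_walk_distinct[OF p1 xV]
        shortest_walk_distinct[OF p2 yV]])
    show "\<not> (1 < length p1 \<and> p1 ! 1 = hd p2)" using yn p2(2) by (metis nth_mem)
  qed (use p1 p2 a xn xV yV in \<open>auto simp: adj_commute\<close>)
qed

lemma adj_graph_dist_cases:
  assumes a: "adj E x y" and z: "z \<in> V"
  shows "\<delta> y z = \<delta> x z + 1 \<or> \<delta> x z = \<delta> y z + 1"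
proof -
  have xV: "x \<in> V" and yV: "y \<in> V" using adjD a by auto
  have "\<delta> x z \<le> \<delta> x y + \<delta> y z" "\<delta> y z \<le> \<delta> y x + \<delta> x z"
    using graph_dist_triangle xV yV z by blast+
  moreover have "\<delta> x y = 1" "\<delta> y x = 1" using graph_dist_adj a by (auto simp: adj_commute)
  ultimately show ?thesis using adj_graph_dist_ne[OF a z] by linarith
qed

lemma closer_neighbour_unique:
  assumes xV: "x \<in> V" and z: "z \<in> V" and a1: "adj E x y1" and a2: "adj E x y2"
    and d1: "\<delta> y1 z + 1 = \<delta> x z" and d2: "\<delta> y2 z + 1 = \<delta> x z"
  shows "y1 = y2"
proof (rule ccontr)
  assume ne: "y1 \<noteq> y2"
  have y1V: "y1 \<in> V" and y2V: "y2 \<in> V" using adjD a1 a2 by auto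
  obtain q1 where q1: "walk E q1" "hd q1 = y1" "last q1 = z" "length q1 = \<delta> y1 z + 1"
    using shortest_walk_exists y1V z by blast
  obtain q2 where q2: "walk E q2" "hd q2 = y2" "last q2 = z" "length q2 = \<delta> y2 z + 1"
    using shortest_walk_exists y2V z by blast
  have xn1: "x \<notin> set q1" using shortest_walk_avoids_farther[OF q1 y1V, of x] d1 adjD[OF a1] by auto
  have xn2: "x \<notin> set q2" using shortest_walk_avoids_farther[OF q2 y2V, of x] d2 adjD[OF a2] by auto
  have ne1: "q1 \<noteq> []" using q1 by auto
  show False
  proof (rule no_converging_paths[of "x # q1" q2])
    show "walk E (x # q1)" using q1 a1 by (simp add: walk_Cons_iff)
    show "distinct (x # q1)" using xn1 shortest_walk_distinct[OF q1 y1V] by simp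
    show "\<not> (1 < length (x # q1) \<and> (x # q1) ! 1 = hd q2)" using ne q1 q2 ne1 by (simp add: hd_conv_nth)
  qed (use q1 q2 a2 xn2 ne1 xV y2V shortest_walk_distinct[OF q2 y2V] in \<open>auto simp: adj_commute\<close>)
qed

lemma sum_neighbours_graph_dist:
  assumes xV: "x \<in> V" and z: "z \<in> V"
  shows "(\<Sum>y\<in>neighbours E x. real (\<delta> y z)) =
     real (degree E x) * real (\<delta> x z) + real (degree E x) - 2 + (if x = z then 2 else 0)"
proof (cases "x = z")
  case True
  then have "(\<Sum>y\<in>neighbours E x. real (\<delta> y z)) = (\<Sum>y\<in>neighbours E x. 1)"
    by (intro sum.cong refl) (simp add: neighbours_def graph_dist_adj adj_commute)
  then show ?thesis using True by (simp add: degree_eq_card_neighbours)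
next
  case False
  obtain y0 where y0: "adj E x y0" "\<delta> y0 z + 1 = \<delta> x z"
    using closer_neighbour_exists xV z False by blast
  have y0n: "y0 \<in> neighbours E x" using y0 by (simp add: neighbours_def)
  have far: "\<delta> y z = \<delta> x z + 1" if "y \<in> neighbours E x - {y0}" for y
    using that closer_neighbour_unique[OF xV z _ y0(1) _ y0(2), of y]
      adj_graph_dist_cases[of x y z] z by (auto simp: neighbours_def)
  have "(\<Sum>y\<in>neighbours E x. real (\<delta> y z))
      = real (\<delta> y0 z) + (\<Sum>y\<in>neighbours E x - {y0}. real (\<delta> x z) + 1)"
    using y0n finite_neighbours far by (simp add: sum.remove)
  also have "\<dots> = real (\<delta> x z) - 1 + (real (degree E x) - 1) * (real (\<delta> x z) + 1)"
  proof -
    have "card (neighbours E x) \<ge> 1" using y0n finite_neighbours card_0_eq by fastforce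
    moreover have "real (\<delta> y0 z) = real (\<delta> x z) - 1" using y0(2) by linarith
    ultimately show ?thesis
      using y0n finite_neighbours by (simp add: degree_eq_card_neighbours of_nat_diff)
  qed
  finally show ?thesis using False by (simp add: algebra_simps)
qed

lemma path_length_eq_graph_dist:
  "walk E q \<Longrightarrow> distinct q \<Longrightarrow> hd q \<in> V \<Longrightarrow> length q = \<delta> (hd q) (last q) + 1"
proof (induction q rule: induct_list012)
  case (3 a a' q)
  define b where "b = last (a' # q)"
  have aa: "adj E a a'" and wq: "walk E (a' # q)" using "3.prems" by (auto simp: walk_Cons_iff)
  have a'V: "a' \<in> V" and bV: "b \<in> V"
    using adjD aa walk_subset_vertices[OF wq] unfolding b_def by auto
  have IH: "length (a' # q) = \<delta> a' b + 1" using "3.IH" wq "3.prems" a'V unfolding b_def by simp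
  have "\<delta> a b = \<delta> a' b + 1"
  proof (rule ccontr)
    assume "\<delta> a b \<noteq> \<delta> a' b + 1"
    then have far: "\<delta> a' b = \<delta> a b + 1" using adj_graph_dist_cases[OF aa bV] by auto
    then have l2: "1 < length (a' # q)" using IH by simp
    have "\<delta> ((a' # q) ! 1) b = \<delta> a' b - 1"
      using shortest_walk_nth(2)[OF wq _ _ IH a'V l2] b_def by simp
    moreover have "adj E a' ((a' # q) ! 1)" using wq l2 unfolding walk_def by force
    ultimately have "(a' # q) ! 1 = a"
      using closer_neighbour_unique[OF a'V bV _ _ _] aa far by (simp add: adj_commute)
    then show False using "3.prems"(2) l2 by (metis distinct.simps(2) nth_mem)
  qed
  then show ?case using IH b_def by simp
qed simp_all

lemma graph_dist_parity:
  assumes u: "u \<in> V" and v: "v \<in> V"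
  shows "x \<in> V \<Longrightarrow> even (\<delta> x u + \<delta> x v + \<delta> u v)"
proof (induction "\<delta> x u" arbitrary: x)
  case 0
  then show ?case using graph_dist_eq_0_iff u by simp
next
  case (Suc m)
  then obtain y where y: "adj E x y" "\<delta> y u + 1 = \<delta> x u"
    using closer_neighbour_exists u by force
  then have "even (\<delta> y u + \<delta> y v + \<delta> u v)" using Suc adjD by auto
  then show ?case using adj_graph_dist_cases[OF y(1) v] y(2) by presburger
qed

lemma sum_degree: "(\<Sum>x\<in>V. real (degree E x)) = 2 * real (card V) - 2"
proof -
  obtain z where z: "z \<in> V" using vertices_nonempty by blast
  have "(\<Sum>y\<in>V. real (degree E y) * real (\<delta> y z)) = (\<Sum>x\<in>V. \<Sum>y\<in>neighbours E x. real (\<delta> y z))"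
    using sum_neighbours_swap[of "\<lambda>x y. real (\<delta> y z)"] by (simp add: degree_eq_card_neighbours)
  also have "\<dots> = (\<Sum>x\<in>V. real (degree E x) * real (\<delta> x z) + real (degree E x) - 2
      + (if x = z then 2 else 0))"
    using sum_neighbours_graph_dist z by (intro sum.cong) auto
  also have "\<dots> = (\<Sum>x\<in>V. real (degree E x) * real (\<delta> x z)) + (\<Sum>x\<in>V. real (degree E x))
      - 2 * real (card V) + 2"
    using z finite_vertices by (simp add: sum.distrib sum_subtractf)
  finally show ?thesis by simp
qed

lemma sum_closer_neighbours:
  assumes kV: "k \<in> V" and xV: "x \<in> V"
  shows "(\<Sum>y\<in>neighbours E k. if \<delta> y x + 1 = \<delta> k x then c else 0) = (if k = x then 0 else c)"
proof (cases "k = x")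
  case False
  then obtain y0 where y0: "adj E k y0" "\<delta> y0 x + 1 = \<delta> k x"
    using closer_neighbour_exists kV xV by blast
  then have "{y \<in> neighbours E k. \<delta> y x + 1 = \<delta> k x} = {y0}"
    using closer_neighbour_unique[OF kV xV] by (auto simp: neighbours_def)
  then show ?thesis using False finite_neighbours by (simp add: sum.inter_filter[symmetric])
qed simp

text \<open>Each vertex other than \<open>x\<close> is the far end of exactly one edge towards \<open>x\<close>.\<close>
lemma sum_degree_mult_graph_dist:
  assumes xV: "x \<in> V"
  shows "(\<Sum>k\<in>V. real (degree E k) * real (\<delta> k x)) = 2 * (\<Sum>k\<in>V. real (\<delta> k x)) - (real (card V) - 1)"
proof -
  let ?closer = "\<lambda>k y. \<delta> y x + 1 = \<delta> k x"
  have split: "real (\<delta> k x) = (if ?closer k y then real (\<delta> k x) else 0) +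
      (if ?closer y k then real (\<delta> y x) - 1 else 0)" if "y \<in> neighbours E k" for k y
    using that adj_graph_dist_cases[of k y x] xV by (auto simp: neighbours_def)
  have "(\<Sum>k\<in>V. real (degree E k) * real (\<delta> k x)) = (\<Sum>k\<in>V. \<Sum>y\<in>neighbours E k. real (\<delta> k x))"
    by (simp add: degree_eq_card_neighbours)
  also have "\<dots> = (\<Sum>k\<in>V. \<Sum>y\<in>neighbours E k. (if ?closer k y then real (\<delta> k x) else 0) +
      (if ?closer y k then real (\<delta> y x) - 1 else 0))"
    using split by (intro sum.cong refl) auto
  also have "\<dots> = (\<Sum>k\<in>V. \<Sum>y\<in>neighbours E k. if ?closer k y then real (\<delta> k x) else 0) +
      (\<Sum>k\<in>V. \<Sum>y\<in>neighbours E k. if ?closer y k then real (\<delta> y x) - 1 else 0)"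
    by (simp add: sum.distrib)
  also have "(\<Sum>k\<in>V. \<Sum>y\<in>neighbours E k. if ?closer y k then real (\<delta> y x) - 1 else 0)
      = (\<Sum>y\<in>V. \<Sum>k\<in>neighbours E y. if ?closer y k then real (\<delta> y x) - 1 else 0)"
    by (rule sum_neighbours_swap)
  also have "\<dots> = (\<Sum>y\<in>V. if y = x then 0 else real (\<delta> y x) - 1)"
    by (intro sum.cong refl sum_closer_neighbours xV)
  also have "(\<Sum>k\<in>V. \<Sum>y\<in>neighbours E k. if ?closer k y then real (\<delta> k x) else 0) = (\<Sum>k\<in>V. real (\<delta> k x))"
    using xV by (intro sum.cong refl) (subst sum_closer_neighbours, auto)
  also have "(\<Sum>y\<in>V. if y = x then 0 else real (\<delta> y x) - 1) = (\<Sum>y\<in>V. real (\<delta> y x) - 1) + 1"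
    using xV finite_vertices by (simp add: sum.If_cases Diff_eq[symmetric] sum_diff1)
  finally show ?thesis using finite_vertices by (simp add: sum_subtractf)
qed

end

section \<open>Random walks\<close>

lemma weighted_decrements_imp_tendsto_zero:
  fixes s :: "nat \<Rightarrow> real"
  assumes s_nonneg: "\<And>t. 0 \<le> s t" and s_decr: "\<And>t. s (Suc t) \<le> s t" and s_lim: "s \<longlonglongrightarrow> 0"
    and summable: "summable (\<lambda>t. real (Suc t) * (s t - s (Suc t)))"
  shows "(\<lambda>N. real N * s N) \<longlonglongrightarrow> 0"
proof -
  define a where "a = (\<lambda>t. real (Suc t) * (s t - s (Suc t)))"
  have summable_a: "summable a" unfolding a_def by (fact summable)
  have tail: "real N * s N \<le> suminf a - (\<Sum>t<N. a t)" for N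
  proof -
    have "(\<lambda>i. s (i + N) - s (Suc (i + N))) sums s N"
      using telescope_sums'[of "\<lambda>i. s (i + N)" 0] LIMSEQ_ignore_initial_segment[OF s_lim, of N]
      by simp
    then have "(\<lambda>i. real N * (s (i + N) - s (Suc (i + N)))) sums (real N * s N)"
      by (rule sums_mult)
    moreover have "real N * (s (i + N) - s (Suc (i + N))) \<le> a (i + N)" for i
      unfolding a_def using s_decr[of "i + N"] by (intro mult_right_mono) auto
    ultimately have "real N * s N \<le> (\<Sum>i. a (i + N))"
      by (intro sums_le[OF _ _ summable_sums[OF summable_ignore_initial_segment[OF summable_a]]])
    then show ?thesis using suminf_split_initial_segment[OF summable_a, of N] by simp
  qed
  have tail_lim: "(\<lambda>N. suminf a - (\<Sum>t<N. a t)) \<longlonglongrightarrow> 0"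
    using tendsto_diff[OF tendsto_const[of "suminf a"] summable_LIMSEQ[OF summable_a]] by simp
  show ?thesis
    by (rule tendsto_sandwich[OF _ _ tendsto_const tail_lim]) (use tail s_nonneg in simp_all)
qed

text \<open>A tail-sum formula: for \<open>s t\<close> the probability that a hitting time exceeds \<open>t\<close>, the series
  is its expectation. Summation by parts turns the partial sums into \<open>(\<Sum>t<N. s t) - N * s N\<close>.\<close>
lemma weighted_decrements_sums:
  fixes s r :: "nat \<Rightarrow> real"
  assumes s_nonneg: "\<And>t. 0 \<le> s t" and s_decr: "\<And>t. s (Suc t) \<le> s t"
    and expansion: "\<And>N. (\<Sum>t<N. s t) + r N = H"
    and r_nonneg: "\<And>N. 0 \<le> r N" and r_le: "\<And>N. r N \<le> C * s N"
  shows "(\<lambda>t. real (Suc t) * (s t - s (Suc t))) sums H"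
proof -
  define a where "a t = real (Suc t) * (s t - s (Suc t))" for t
  have partial: "(\<Sum>t<N. a t) = H - r N - real N * s N" for N
  proof -
    have "(\<Sum>t<N. a t) = (\<Sum>t<N. s t) - real N * s N"
      by (induction N) (simp_all add: a_def algebra_simps)
    then show ?thesis using expansion[of N] by simp
  qed
  have Ns_le: "real N * s N \<le> H" for N
  proof -
    have "real N * s N \<le> (\<Sum>t<N. s t)"
      using sum_mono[of "{..<N}" "\<lambda>_. s N" s] lift_Suc_antimono_le[of s, OF s_decr] by simp
    then show ?thesis using expansion[of N] r_nonneg[of N] by simp
  qed
  have "\<forall>\<^sub>F N in sequentially. s N \<le> H / real N"
    using eventually_gt_at_top[of 0] by eventually_elim (use Ns_le in \<open>simp add: field_simps mult.commute\<close>)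
  then have s_lim: "s \<longlonglongrightarrow> 0"
    by (intro tendsto_sandwich[OF _ _ tendsto_const lim_const_over_n[of H]]) (use s_nonneg in simp_all)
  have "summable a"
  proof (rule bounded_imp_summable[of a H])
    show "0 \<le> a t" for t unfolding a_def using s_decr[of t] by simp
    fix n
    have "(\<Sum>k\<le>n. a k) = H - r (Suc n) - real (Suc n) * s (Suc n)"
      using partial[of "Suc n"] by (simp only: lessThan_Suc_atMost)
    moreover have "0 \<le> real (Suc n) * s (Suc n)" using s_nonneg by simp
    ultimately show "(\<Sum>k\<le>n. a k) \<le> H" using r_nonneg[of "Suc n"] by linarith
  qed
  then have Ns_lim: "(\<lambda>N. real N * s N) \<longlonglongrightarrow> 0"
    using weighted_decrements_imp_tendsto_zero[OF s_nonneg s_decr s_lim] unfolding a_def by blast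
  have Cs_lim: "(\<lambda>N. C * s N) \<longlonglongrightarrow> 0"
    using tendsto_mult[OF tendsto_const[of C] s_lim] by simp
  have r_lim: "r \<longlonglongrightarrow> 0"
    by (rule tendsto_sandwich[OF _ _ tendsto_const Cs_lim]) (use r_nonneg r_le in simp_all)
  have "(\<lambda>N. \<Sum>t<N. a t) \<longlonglongrightarrow> H - 0 - 0"
    unfolding partial by (rule tendsto_diff[OF tendsto_diff[OF tendsto_const r_lim] Ns_lim])
  then show ?thesis by (simp add: sums_def a_def)
qed

text \<open>\<open>taboo_mean V E k f t j\<close> is the mean of \<open>f\<close> at time \<open>t\<close> over the walks from \<open>j\<close> that avoid
  \<open>k\<close> at times \<open>1, \<dots>, t\<close>; for \<open>f = 1\<close> it is the probability of not having reached \<open>k\<close> by time \<open>t\<close>.\<close>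
primrec taboo_mean :: "'a set \<Rightarrow> 'a set set \<Rightarrow> 'a \<Rightarrow> ('a \<Rightarrow> real) \<Rightarrow> nat \<Rightarrow> 'a \<Rightarrow> real" where
  "taboo_mean V E k f 0 j = f j"
| "taboo_mean V E k f (Suc t) j = (\<Sum>l\<in>V - {k}. trans_mat E j l * taboo_mean V E k f t l)"

lemma trans_mat_nonneg: "0 \<le> trans_mat E x y"
  by (simp add: trans_mat_def adj_mat_def)

lemma taboo_mean_nonneg:
  "(\<And>x. x \<in> V \<Longrightarrow> 0 \<le> f x) \<Longrightarrow> j \<in> V \<Longrightarrow> 0 \<le> taboo_mean V E k f t j"
  by (induction t arbitrary: j) (auto intro!: sum_nonneg mult_nonneg_nonneg trans_mat_nonneg)

lemma taboo_mean_mono: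
  "(\<And>x. x \<in> V \<Longrightarrow> f x \<le> g x) \<Longrightarrow> j \<in> V \<Longrightarrow> taboo_mean V E k f t j \<le> taboo_mean V E k g t j"
  by (induction t arbitrary: j) (auto intro!: sum_mono mult_left_mono trans_mat_nonneg)

lemma taboo_mean_const: "taboo_mean V E k (\<lambda>_. c) t j = c * taboo_mean V E k (\<lambda>_. 1) t j"
  by (induction t arbitrary: j) (simp_all add: sum_distrib_left algebra_simps)

locale nontrivial_graph = connected_simple_graph +
  assumes card_ge_2: "2 \<le> card V"
begin

lemma degree_pos:
  assumes xV: "x \<in> V"
  shows "0 < degree E x"
proof -
  obtain y where y: "y \<in> V" "y \<noteq> x"
    using card_ge_2 card_le_Suc0_iff_eq[OF finite_vertices] xV by (metis not_less_eq_eq numeral_2_eq_2)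
  then obtain y' where "adj E x y'" using closer_neighbour_exists xV by blast
  then have "y' \<in> neighbours E x" by (simp add: neighbours_def)
  then show ?thesis using finite_neighbours card_gt_0_iff by (auto simp: degree_eq_card_neighbours)
qed

lemma sum_trans_mat_mult:
  assumes "x \<in> V"
  shows "(\<Sum>l\<in>V. trans_mat E x l * f l) = (\<Sum>l\<in>neighbours E x. f l) / real (degree E x)"
  unfolding sum_neighbours_eq_sum_if sum_divide_distrib
  by (intro sum.cong) (auto simp: trans_mat_def adj_mat_def)

lemma sum_trans_mat: "x \<in> V \<Longrightarrow> (\<Sum>l\<in>V. trans_mat E x l) = 1"
  using sum_trans_mat_mult[of x "\<lambda>_. 1"] degree_pos[of x] by (simp add: degree_eq_card_neighbours)

lemma sum_trans_mat_Diff: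
  "x \<in> V \<Longrightarrow> k \<in> V \<Longrightarrow> (\<Sum>l\<in>V - {k}. trans_mat E x l) = 1 - trans_mat E x k"
  using sum_trans_mat[of x] finite_vertices by (simp add: sum_diff1)

lemma taboo_survival_Suc_le:
  assumes "k \<in> V" "j \<in> V"
  shows "taboo_mean V E k (\<lambda>_. 1) (Suc t) j \<le> taboo_mean V E k (\<lambda>_. 1) t j"
  using assms(2)
proof (induction t arbitrary: j)
  case 0
  then show ?case using sum_trans_mat_Diff[OF 0 assms(1)] trans_mat_nonneg[of E j k] by simp
next
  case (Suc t)
  then show ?case by (simp, intro sum_mono mult_left_mono trans_mat_nonneg) auto
qed

lemma first_passage_Suc:
  assumes "k \<in> V" "j \<in> V"
  shows "first_passage V E (Suc t) j k
    = taboo_mean V E k (\<lambda>_. 1) t j - taboo_mean V E k (\<lambda>_. 1) (Suc t) j"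
  using assms(2)
proof (induction t arbitrary: j)
  case 0
  then show ?case using sum_trans_mat_Diff[OF 0 assms(1)] by simp
next
  case (Suc t)
  then show ?case by (simp add: right_diff_distrib sum_subtractf)
qed

lemma hitting_system_nonneg:
  assumes kV: "k \<in> V" and hk: "h k = 0"
    and sys: "\<And>j. j \<in> V - {k} \<Longrightarrow> h j = 1 + (\<Sum>l\<in>V - {k}. trans_mat E j l * h l)"
    and jV: "j \<in> V"
  shows "0 \<le> h j"
proof -
  define m where "m = Min (h ` V)"
  have fin: "finite (h ` V)" "h ` V \<noteq> {}" using finite_vertices kV by auto
  have m_le: "m \<le> h l" if "l \<in> V" for l using Min_le[OF fin(1)] that unfolding m_def by auto
  obtain j0 where j0: "j0 \<in> V" "h j0 = m" using Min_in[OF fin] unfolding m_def by auto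
  have "0 \<le> m"
  proof (rule ccontr)
    assume neg: "\<not> 0 \<le> m"
    then have "j0 \<noteq> k" using hk j0 by auto
    have "m * (\<Sum>l\<in>V - {k}. trans_mat E j0 l) \<ge> m"
      using sum_trans_mat_Diff[OF j0(1) kV] trans_mat_nonneg[of E j0 k] neg
      by (simp add: mult_le_cancel_left1)
    also have "m * (\<Sum>l\<in>V - {k}. trans_mat E j0 l) \<le> (\<Sum>l\<in>V - {k}. trans_mat E j0 l * h l)"
      unfolding sum_distrib_left using m_le
      by (intro sum_mono) (simp add: mult.commute mult_right_mono trans_mat_nonneg)
    also have "\<dots> = h j0 - 1" using sys[of j0] j0 \<open>j0 \<noteq> k\<close> by simp
    finally show False using j0 by simp
  qed
  then show ?thesis using m_le jV by fastforce
qed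

lemma hitting_system_expansion:
  assumes sys: "\<And>j. j \<in> V - {k} \<Longrightarrow> h j = 1 + (\<Sum>l\<in>V - {k}. trans_mat E j l * h l)"
  shows "j \<in> V - {k} \<Longrightarrow> h j = (\<Sum>t<N. taboo_mean V E k (\<lambda>_. 1) t j) + taboo_mean V E k h N j"
proof (induction N arbitrary: j)
  case (Suc N)
  have "h j = 1 + (\<Sum>l\<in>V - {k}. trans_mat E j l *
      ((\<Sum>t<N. taboo_mean V E k (\<lambda>_. 1) t l) + taboo_mean V E k h N l))"
    using sys[OF Suc.prems] Suc.IH by simp
  also have "\<dots> = 1 + (\<Sum>t<N. taboo_mean V E k (\<lambda>_. 1) (Suc t) j) + taboo_mean V E k h (Suc N) j"
    by (simp add: distrib_left sum.distrib sum_distrib_left) (rule sum.swap)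
  also have "\<dots> = (\<Sum>t<Suc N. taboo_mean V E k (\<lambda>_. 1) t j) + taboo_mean V E k h (Suc N) j"
    by (subst sum.lessThan_Suc_shift) simp
  finally show ?case .
qed simp

lemma mfpt_eq_hitting_solution:
  assumes kV: "k \<in> V" and hk: "h k = 0"
    and sys: "\<And>j. j \<in> V - {k} \<Longrightarrow> h j = 1 + (\<Sum>l\<in>V - {k}. trans_mat E j l * h l)"
    and jV: "j \<in> V - {k}"
  shows "mfpt V E j k = h j"
proof -
  let ?s = "\<lambda>t. taboo_mean V E k (\<lambda>_. 1) t j"
  define C where "C = Max (h ` V)"
  have h_le: "h x \<le> C" if "x \<in> V" for x
    unfolding C_def using finite_vertices that by (intro Max_ge) auto
  have h_nonneg: "0 \<le> h x" if "x \<in> V" for x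
    using hitting_system_nonneg[OF kV hk sys that] .
  have "(\<lambda>t. real (Suc t) * (?s t - ?s (Suc t))) sums h j"
  proof (rule weighted_decrements_sums[where r = "\<lambda>N. taboo_mean V E k h N j" and C = C])
    show "?s (Suc t) \<le> ?s t" for t using taboo_survival_Suc_le[OF kV, of j t] jV by simp
    show "(\<Sum>t<N. ?s t) + taboo_mean V E k h N j = h j" for N
      by (rule hitting_system_expansion[OF sys jV, symmetric])
    show "taboo_mean V E k h N j \<le> C * ?s N" for N
    proof -
      have "taboo_mean V E k h N j \<le> taboo_mean V E k (\<lambda>_. C) N j"
        using h_le jV by (intro taboo_mean_mono) auto
      then show ?thesis using taboo_mean_const[of V E k C N j] by linarith
    qed
    show "0 \<le> ?s t" for t using jV by (intro taboo_mean_nonneg) auto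
    show "0 \<le> taboo_mean V E k h N j" for N using jV h_nonneg by (intro taboo_mean_nonneg) auto
  qed
  then have "(\<lambda>t. real (Suc t) * first_passage V E (Suc t) j k) sums h j"
    using first_passage_Suc[OF kV] jV by simp
  then have "(\<lambda>t. real t * first_passage V E t j k) sums h j"
    using sums_Suc_iff[where f = "\<lambda>t. real t * first_passage V E t j k"] by simp
  then show ?thesis unfolding mfpt_def by (simp add: sums_iff)
qed

lemma sum_degree_pos: "0 < (\<Sum>x\<in>V. real (degree E x))"
  using degree_pos vertices_nonempty finite_vertices by (intro sum_pos) auto

lemma sum_adj_mat_mult:
  "(\<Sum>j\<in>V. adj_mat E j k * f j) = (\<Sum>j\<in>neighbours E k. f j)"
  unfolding sum_neighbours_eq_sum_if by (intro sum.cong) (auto simp: adj_mat_def adj_commute)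

lemma stationary_eq:
  "stationary V E = (\<lambda>k. if k \<in> V then real (degree E k) / (\<Sum>x\<in>V. real (degree E x)) else 0)"
  (is "_ = ?w")
  unfolding stationary_def
proof (rule the_equality)
  let ?D = "\<Sum>x\<in>V. real (degree E x)"
  show "(\<forall>k\<in>V. 0 \<le> ?w k) \<and> (\<forall>k. k \<notin> V \<longrightarrow> ?w k = 0) \<and> sum ?w V = 1 \<and>
      (\<forall>k\<in>V. (\<Sum>j\<in>V. ?w j * trans_mat E j k) = ?w k)"
  proof (intro conjI ballI allI impI)
    show "sum ?w V = 1" using sum_degree_pos by (simp add: sum_divide_distrib[symmetric])
    fix k assume "k \<in> V"
    have "(\<Sum>j\<in>V. ?w j * trans_mat E j k) = (\<Sum>j\<in>V. adj_mat E j k * (1 / ?D))"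
      using degree_pos by (intro sum.cong) (auto simp: trans_mat_def)
    also have "\<dots> = (\<Sum>j\<in>neighbours E k. 1 / ?D)" by (rule sum_adj_mat_mult)
    finally show "(\<Sum>j\<in>V. ?w j * trans_mat E j k) = ?w k"
      using \<open>k \<in> V\<close> by (simp add: degree_eq_card_neighbours)
  qed (use sum_degree_pos in auto)
  fix w assume w: "(\<forall>k\<in>V. 0 \<le> w k) \<and> (\<forall>k. k \<notin> V \<longrightarrow> w k = 0) \<and> sum w V = 1 \<and>
      (\<forall>k\<in>V. (\<Sum>j\<in>V. w j * trans_mat E j k) = w k)"
  define x where "x j = w j / real (degree E j)" for j
  have wx: "w j = real (degree E j) * x j" if "j \<in> V" for j
    using degree_pos[OF that] unfolding x_def by simp
  have "(\<Sum>j\<in>neighbours E k. x j) = real (degree E k) * x k" if "k \<in> V" for k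
  proof -
    have "(\<Sum>j\<in>neighbours E k. x j) = (\<Sum>j\<in>V. w j * trans_mat E j k)"
      unfolding sum_adj_mat_mult[symmetric] by (intro sum.cong) (auto simp: x_def trans_mat_def)
    then show ?thesis using w wx that by simp
  qed
  then obtain c where c: "\<And>j. j \<in> V \<Longrightarrow> x j = c"
    using harmonic_imp_constant vertices_nonempty by blast
  have "1 = (\<Sum>j\<in>V. real (degree E j) * c)" using w wx c by (simp cong: sum.cong)
  also have "\<dots> = ?D * c" by (simp add: sum_distrib_right)
  finally have "c = 1 / ?D" using sum_degree_pos by (simp add: field_simps)
  then show "w = ?w" using w wx c by (auto simp: fun_eq_iff)
qed

text \<open>The effective resistance satisfies these hypotheses; for a tree it is the graph distance.\<close>
lemma mfpt_eq_resistance_formula: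
  fixes R :: "'a \<Rightarrow> 'a \<Rightarrow> real" and \<alpha> :: "'a \<Rightarrow> real"
  assumes R_diag: "\<And>x. x \<in> V \<Longrightarrow> R x x = 0"
    and R_laplacian: "\<And>j l. j \<in> V \<Longrightarrow> l \<in> V \<Longrightarrow>
        (\<Sum>i\<in>neighbours E j. R i l) = real (degree E j) * R j l - \<alpha> j + (if j = l then 2 else 0)"
    and kV: "k \<in> V" and jV: "j \<in> V - {k}"
  shows "mfpt V E j k = (\<Sum>l\<in>V. real (degree E l) * (R j k + R k l - R j l)) / 2"
proof -
  let ?d = "\<lambda>x. real (degree E x)"
  define h where "h x = (\<Sum>l\<in>V. ?d l * (R x k + R k l - R x l)) / 2" for x
  have hk: "h k = 0" unfolding h_def using R_diag[OF kV] by simp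
  have sys: "h j = 1 + (\<Sum>l\<in>V - {k}. trans_mat E j l * h l)" if j: "j \<in> V - {k}" for j
  proof -
    have jV: "j \<in> V" and jk: "j \<noteq> k" using j by auto
    have "(\<Sum>i\<in>neighbours E j. h i) =
        (\<Sum>l\<in>V. ?d l * ((\<Sum>i\<in>neighbours E j. R i k) + ?d j * R k l - (\<Sum>i\<in>neighbours E j. R i l))) / 2"
      unfolding h_def sum_divide_distrib[symmetric]
      by (subst sum.swap) (simp add: sum_distrib_left[symmetric] sum.distrib sum_subtractf
          degree_eq_card_neighbours)
    also have "\<dots> = (\<Sum>l\<in>V. ?d j * (?d l * (R j k + R k l - R j l)) - (if j = l then 2 * ?d l else 0)) / 2"
    proof -
      have "?d l * ((\<Sum>i\<in>neighbours E j. R i k) + ?d j * R k l - (\<Sum>i\<in>neighbours E j. R i l))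
          = ?d j * (?d l * (R j k + R k l - R j l)) - (if j = l then 2 * ?d l else 0)" if "l \<in> V" for l
        unfolding R_laplacian[OF jV kV] R_laplacian[OF jV that] using jk
        by (cases "j = l") (simp_all add: algebra_simps)
      then show ?thesis by (intro arg_cong[where f = "\<lambda>x. x / 2"] sum.cong) auto
    qed
    also have "\<dots> = (?d j * (\<Sum>l\<in>V. ?d l * (R j k + R k l - R j l)) - 2 * ?d j) / 2"
      using jV finite_vertices by (simp add: sum_subtractf sum_distrib_left)
    also have "\<dots> = ?d j * h j - ?d j" unfolding h_def by (simp add: field_simps)
    finally have "(\<Sum>i\<in>neighbours E j. h i) = ?d j * h j - ?d j" .
    moreover have "(\<Sum>l\<in>V - {k}. trans_mat E j l * h l) = (\<Sum>i\<in>neighbours E j. h i) / ?d j"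
      using hk kV finite_vertices sum_trans_mat_mult[OF jV] by (simp add: sum_diff1)
    ultimately have "(\<Sum>l\<in>V - {k}. trans_mat E j l * h l) = (?d j * h j - ?d j) / ?d j" by simp
    also have "\<dots> = h j - 1" using degree_pos[OF jV] by (simp add: diff_divide_distrib)
    finally show ?thesis by simp
  qed
  show ?thesis using mfpt_eq_hitting_solution[OF kV hk sys jV] unfolding h_def .
qed

lemma kemeny_eq_resistance_formula:
  fixes R :: "'a \<Rightarrow> 'a \<Rightarrow> real" and \<alpha> :: "'a \<Rightarrow> real"
  assumes R_diag: "\<And>x. x \<in> V \<Longrightarrow> R x x = 0"
    and R_laplacian: "\<And>j l. j \<in> V \<Longrightarrow> l \<in> V \<Longrightarrow>
        (\<Sum>i\<in>neighbours E j. R i l) = real (degree E j) * R j l - \<alpha> j + (if j = l then 2 else 0)"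
  shows "kemeny V E = (\<Sum>k\<in>V. \<Sum>l\<in>V. real (degree E k) * real (degree E l) * R k l)
    / (2 * (\<Sum>x\<in>V. real (degree E x)))"
proof -
  let ?d = "\<lambda>x. real (degree E x)"
  let ?D = "\<Sum>x\<in>V. ?d x"
  define j where "j = (SOME j. j \<in> V)"
  have jV: "j \<in> V" unfolding j_def using vertices_nonempty by (simp add: some_in_eq)
  define h where "h k = (\<Sum>l\<in>V. ?d l * (R j k + R k l - R j l)) / 2" for k
  have "mfpt V E j k = h k" if "k \<in> V - {j}" for k
    using mfpt_eq_resistance_formula[OF R_diag R_laplacian, of k j] that jV unfolding h_def by auto
  then have "kemeny V E = (\<Sum>k\<in>V - {j}. h k * (?d k / ?D))"
    unfolding kemeny_def j_def[symmetric] Let_def by (intro sum.cong) (auto simp: stationary_eq)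
  also have "\<dots> = (\<Sum>k\<in>V. ?d k * h k) / ?D"
    using R_diag[OF jV] jV finite_vertices
    by (simp add: sum_diff1 h_def sum_divide_distrib mult.commute)
  also have "(\<Sum>k\<in>V. ?d k * h k) = (\<Sum>k\<in>V. \<Sum>l\<in>V. ?d k * ?d l * R k l) / 2"
  proof -
    have "(\<Sum>k\<in>V. \<Sum>l\<in>V. ?d k * ?d l * R j k) = (\<Sum>k\<in>V. \<Sum>l\<in>V. ?d k * ?d l * R j l)"
      by (subst sum.swap) (simp add: mult.commute)
    then show ?thesis unfolding h_def
      by (simp add: sum_distrib_left sum_divide_distrib[symmetric] sum.distrib sum_subtractf algebra_simps)
  qed
  finally show ?thesis by (simp add: field_simps)
qed

end

lemma sum_lessThan_of_nat: "(\<Sum>i<s. real i) = real s * (real s - 1) / 2"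
  by (induction s) (auto simp: field_simps)

lemma sum_lessThan_of_nat_square: "(\<Sum>i<s. (real i)\<^sup>2) = (real s - 1) * real s * (2 * real s - 1) / 6"
  by (induction s) (auto simp: field_simps power2_eq_square)

lemma sum_lessThan_of_nat_times_Suc: "(\<Sum>i<s. real i * (real i + 1)) = (real s ^ 3 - real s) / 3"
  by (induction s) (auto simp: field_simps power3_eq_cube)

lemma sum_lessThan_abs_diff: "(\<Sum>i<s. \<Sum>j<s. \<bar>real i - real j\<bar>) = (real s ^ 3 - real s) / 3"
proof (induction s)
  case (Suc s)
  have row: "(\<Sum>j<s. \<bar>real s - real j\<bar>) = real s * (real s + 1) / 2"
  proof -
    have "(\<Sum>j<s. \<bar>real s - real j\<bar>) = (\<Sum>j<s. real s - real j)" by (intro sum.cong) auto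
    then show ?thesis by (simp add: sum_subtractf sum_lessThan_of_nat field_simps)
  qed
  moreover have col: "(\<Sum>i<s. \<bar>real i - real s\<bar>) = real s * (real s + 1) / 2"
    using row by (simp add: abs_minus_commute)
  moreover have "(\<Sum>i<Suc s. \<Sum>j<Suc s. \<bar>real i - real j\<bar>) = (\<Sum>i<s. \<Sum>j<s. \<bar>real i - real j\<bar>)
      + (\<Sum>i<s. \<bar>real i - real s\<bar>) + (\<Sum>j<s. \<bar>real s - real j\<bar>)"
    by (simp add: sum.distrib)
  ultimately show ?case using Suc.IH by (simp add: field_simps power3_eq_cube)
qed simp

lemma sum_lessThan_abs_dist_ge: "(\<Sum>i<s. \<bar>c - real i\<bar>) \<ge> (real s ^ 2 - 1) / 4"
proof (induction s arbitrary: c rule: nat_induct2)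
  case (step s)
  have "(\<Sum>i<s + 2. \<bar>c - real i\<bar>) = \<bar>c - real 0\<bar> + (\<Sum>i<Suc s. \<bar>c - real (Suc i)\<bar>)"
    using sum.lessThan_Suc_shift[of "\<lambda>i. \<bar>c - real i\<bar>" "Suc s"] by simp
  also have "\<dots> = \<bar>c\<bar> + (\<Sum>i<s. \<bar>(c - 1) - real i\<bar>) + \<bar>c - real (s + 1)\<bar>"
    by (simp add: algebra_simps)
  finally have "(\<Sum>i<s + 2. \<bar>c - real i\<bar>) = \<bar>c\<bar> + (\<Sum>i<s. \<bar>(c - 1) - real i\<bar>) + \<bar>c - real (s + 1)\<bar>" .
  moreover have "\<bar>c\<bar> + \<bar>c - real (s + 1)\<bar> \<ge> real s + 1" by linarith
  ultimately have "(\<Sum>i<s + 2. \<bar>c - real i\<bar>) \<ge> real s + 1 + (real s ^ 2 - 1) / 4"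
    using step.IH[of "c - 1"] by linarith
  then show ?case by (simp add: field_simps power2_eq_square)
qed simp_all

lemma sum_lessThan_square_dist_ge: "(\<Sum>i<s. (c - real i)\<^sup>2) \<ge> real s * (real s ^ 2 - 1) / 12"
proof -
  have "(\<Sum>i<s. (c - real i)\<^sup>2) = real s * c\<^sup>2 - 2 * c * (\<Sum>i<s. real i) + (\<Sum>i<s. (real i)\<^sup>2)"
    by (simp add: power2_diff sum.distrib sum_subtractf sum_distrib_left)
  also have "\<dots> = real s * (c - (real s - 1) / 2)\<^sup>2 + real s * (real s ^ 2 - 1) / 12"
    unfolding sum_lessThan_of_nat sum_lessThan_of_nat_square by (simp add: field_simps power2_eq_square)
  finally show ?thesis by simp
qed

lemma abs_half_sum_plus_abs_half_diff: "\<bar>(a + b) / 2\<bar> + \<bar>(a - b) / 2\<bar> = max \<bar>a\<bar> \<bar>b\<bar>"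
  for a b :: real
  by (cases "a \<ge> 0"; cases "b \<ge> 0"; cases "a + b \<ge> 0"; cases "a - b \<ge> 0") (auto simp: field_simps)

lemma of_nat_eq_sum_indicator:
  assumes "a \<le> L"
  shows "real a = (\<Sum>k\<in>{1..L}. if k \<le> a then 1 else 0)"
proof -
  have "{k \<in> {1..L}. k \<le> a} = {1..a}" using assms by auto
  then show ?thesis by (simp add: sum.inter_filter[symmetric])
qed

lemma sum_eq_sum_level_sets:
  assumes "finite A" "\<And>x. x \<in> A \<Longrightarrow> f x \<le> L"
  shows "(\<Sum>x\<in>A. real (f x)) = (\<Sum>k\<in>{1..L}. real (card {x \<in> A. k \<le> f x}))"
proof -
  have "(\<Sum>x\<in>A. real (f x)) = (\<Sum>x\<in>A. \<Sum>k\<in>{1..L}. if k \<le> f x then 1 else 0)"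
    using assms(2) by (intro sum.cong refl of_nat_eq_sum_indicator)
  also have "\<dots> = (\<Sum>k\<in>{1..L}. real (card {x \<in> A. k \<le> f x}))"
    using assms(1) by (subst sum.swap) (simp add: sum.inter_filter[symmetric])
  finally show ?thesis .
qed

lemma sum_sum_min_eq_sum_level_sets:
  assumes "finite A" "\<And>x. x \<in> A \<Longrightarrow> f x \<le> L"
  shows "(\<Sum>x\<in>A. \<Sum>y\<in>A. real (min (f x) (f y))) = (\<Sum>k\<in>{1..L}. (real (card {x \<in> A. k \<le> f x}))\<^sup>2)"
proof -
  let ?I = "\<lambda>k x. if k \<le> f x then 1 else 0 :: real"
  have "(\<Sum>x\<in>A. \<Sum>y\<in>A. real (min (f x) (f y))) = (\<Sum>x\<in>A. \<Sum>y\<in>A. \<Sum>k\<in>{1..L}. ?I k x * ?I k y)"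
  proof (intro sum.cong refl)
    fix x y assume "x \<in> A" "y \<in> A"
    then have "real (min (f x) (f y)) = (\<Sum>k\<in>{1..L}. if k \<le> min (f x) (f y) then 1 else 0)"
      using assms(2) by (intro of_nat_eq_sum_indicator) (simp add: min.coboundedI1)
    also have "\<dots> = (\<Sum>k\<in>{1..L}. ?I k x * ?I k y)" by (intro sum.cong) auto
    finally show "real (min (f x) (f y)) = (\<Sum>k\<in>{1..L}. ?I k x * ?I k y)" .
  qed
  also have "\<dots> = (\<Sum>x\<in>A. \<Sum>k\<in>{1..L}. \<Sum>y\<in>A. ?I k x * ?I k y)"
    by (intro sum.cong refl) (rule sum.swap)
  also have "\<dots> = (\<Sum>k\<in>{1..L}. \<Sum>x\<in>A. \<Sum>y\<in>A. ?I k x * ?I k y)"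
    by (rule sum.swap)
  also have "\<dots> = (\<Sum>k\<in>{1..L}. (\<Sum>x\<in>A. ?I k x) * (\<Sum>y\<in>A. ?I k y))"
    by (simp add: sum_product)
  also have "\<dots> = (\<Sum>k\<in>{1..L}. (real (card {x \<in> A. k \<le> f x}))\<^sup>2)"
    using assms(1) by (simp add: sum.inter_filter[symmetric] power2_eq_square)
  finally show ?thesis .
qed

lemma sum_sum_weighted_square_diff:
  fixes w x :: "'a \<Rightarrow> real"
  assumes "(\<Sum>k\<in>A. w k) \<noteq> 0"
  defines "m \<equiv> (\<Sum>k\<in>A. w k * x k) / (\<Sum>k\<in>A. w k)"
  shows "(\<Sum>k\<in>A. \<Sum>l\<in>A. w k * w l * (x k - x l)\<^sup>2) = 2 * (\<Sum>k\<in>A. w k) * (\<Sum>k\<in>A. w k * (x k - m)\<^sup>2)"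
proof -
  define y where "y k = x k - m" for k
  have "(\<Sum>k\<in>A. w k * y k) = (\<Sum>k\<in>A. w k * x k) - m * (\<Sum>k\<in>A. w k)"
    unfolding y_def by (simp add: right_diff_distrib sum_subtractf sum_distrib_left mult.commute)
  then have y0: "(\<Sum>k\<in>A. w k * y k) = 0" using assms(1) unfolding m_def by simp
  have "(\<Sum>k\<in>A. \<Sum>l\<in>A. w k * w l * (x k - x l)\<^sup>2) = (\<Sum>k\<in>A. \<Sum>l\<in>A. w k * w l * (y k - y l)\<^sup>2)"
    unfolding y_def by simp
  also have "\<dots> = (\<Sum>k\<in>A. \<Sum>l\<in>A. w l * (w k * (y k)\<^sup>2)) + (\<Sum>k\<in>A. \<Sum>l\<in>A. w k * (w l * (y l)\<^sup>2))
       - 2 * ((\<Sum>k\<in>A. w k * y k) * (\<Sum>l\<in>A. w l * y l))"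
    by (simp add: power2_diff sum.distrib sum_subtractf sum_distrib_left sum_product algebra_simps)
  also have "\<dots> = 2 * (\<Sum>k\<in>A. w k) * (\<Sum>k\<in>A. w k * (y k)\<^sup>2)"
    using y0 by (simp add: sum_distrib_left[symmetric] sum_distrib_right[symmetric] sum.swap[of _ A A])
  finally show ?thesis unfolding y_def .
qed

lemma sum_sum_ge_block_sums:
  fixes F :: "'a \<Rightarrow> 'a \<Rightarrow> real"
  assumes "finite A" "B \<subseteq> A"
    and nonneg: "\<And>x y. x \<in> A \<Longrightarrow> y \<in> A \<Longrightarrow> 0 \<le> F x y"
    and sym: "\<And>x y. x \<in> A \<Longrightarrow> y \<in> A \<Longrightarrow> F x y = F y x"
  shows "(\<Sum>x\<in>A. \<Sum>y\<in>A. F x y) \<ge> (\<Sum>x\<in>B. \<Sum>y\<in>B. F x y) + 2 * (\<Sum>x\<in>A - B. \<Sum>y\<in>B. F x y)"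
proof -
  have split: "(\<Sum>x\<in>A. g x) = (\<Sum>x\<in>A - B. g x) + (\<Sum>x\<in>B. g x)" for g :: "'a \<Rightarrow> real"
    using sum.subset_diff[OF assms(2,1)] .
  have "(\<Sum>x\<in>B. \<Sum>y\<in>A - B. F x y) = (\<Sum>y\<in>A - B. \<Sum>x\<in>B. F y x)"
    using sym assms(2) by (subst sum.swap) (intro sum.cong refl; auto)
  moreover have "(\<Sum>x\<in>A - B. \<Sum>y\<in>A - B. F x y) \<ge> 0" using nonneg by (intro sum_nonneg) auto
  ultimately show ?thesis by (simp add: split sum.distrib)
qed

lemma sum_sum_add_indicator_weights:
  fixes w :: "'a \<Rightarrow> real" and f :: "'a \<Rightarrow> 'a \<Rightarrow> real"
  assumes fin: "finite A" and uA: "u \<in> A" and vA: "v \<in> A" and uv: "u \<noteq> v"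
    and sym: "\<And>x y. x \<in> A \<Longrightarrow> y \<in> A \<Longrightarrow> f x y = f y x" and "f u u = 0" "f v v = 0"
  defines "e k \<equiv> (if k = u then 1 else 0) + (if k = v then 1 else 0)"
  shows "(\<Sum>k\<in>A. \<Sum>l\<in>A. (w k + e k) * (w l + e l) * f k l)
     = (\<Sum>k\<in>A. \<Sum>l\<in>A. w k * w l * f k l) + 2 * (\<Sum>k\<in>A. w k * f k u)
       + 2 * (\<Sum>k\<in>A. w k * f k v) + 2 * f u v"
proof -
  have e: "(\<Sum>l\<in>A. e l * g l) = g u + g v" for g :: "'a \<Rightarrow> real"
  proof -
    have "(\<Sum>l\<in>A. e l * g l) = (\<Sum>l\<in>A. if l = u then g l else 0) + (\<Sum>l\<in>A. if l = v then g l else 0)"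
      unfolding e_def sum.distrib[symmetric] by (intro sum.cong) auto
    then show ?thesis using fin uA vA by (simp add: sum.delta')
  qed
  have "(\<Sum>k\<in>A. \<Sum>l\<in>A. (w k + e k) * (w l + e l) * f k l)
      = (\<Sum>k\<in>A. \<Sum>l\<in>A. w k * w l * f k l) + (\<Sum>k\<in>A. w k * (\<Sum>l\<in>A. e l * f k l))
        + (\<Sum>k\<in>A. e k * (\<Sum>l\<in>A. w l * f k l)) + (\<Sum>k\<in>A. e k * (\<Sum>l\<in>A. e l * f k l))"
    by (simp add: sum.distrib algebra_simps sum_distrib_left)
  also have "\<dots> = (\<Sum>k\<in>A. \<Sum>l\<in>A. w k * w l * f k l) + (\<Sum>k\<in>A. w k * (f k u + f k v))
        + ((\<Sum>l\<in>A. w l * f l u) + (\<Sum>l\<in>A. w l * f l v)) + ((f u u + f u v) + (f v u + f v v))"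
    using sym uA vA by (simp add: e cong: sum.cong)
  finally show ?thesis using assms(6,7) sym[OF uA vA] by (simp add: sum.distrib distrib_left)
qed

section \<open>A tree with one added edge\<close>

locale tree_plus_edge = tree +
  fixes u v :: 'a
  assumes uV: "u \<in> V" and vV: "v \<in> V" and uv: "u \<noteq> v" and not_adj_uv: "\<not> adj E u v"
begin

abbreviation E' :: "'a set set" where "E' \<equiv> insert {u, v} E"

lemma adj_plus_iff: "adj E' a b \<longleftrightarrow> adj E a b \<or> {a, b} = {u, v}"
  unfolding adj_def by auto

lemma card_ge_2: "2 \<le> card V"
  using uV vV uv finite_vertices card_mono[of V "{u, v}"] by auto

lemma nontrivial_tree: "nontrivial_graph V E"
  by unfold_locales (rule card_ge_2)

lemma nontrivial_plus: "nontrivial_graph V E'"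
proof unfold_locales
  show "simple_graph V E'" using simple uV vV uv unfolding simple_graph_def by auto
  have "walk E xs \<Longrightarrow> walk E' xs" for xs unfolding walk_def using adj_plus_iff by blast
  then show "connected_graph V E'" using connected unfolding connected_graph_def by meson
qed (rule card_ge_2)

lemma sum_neighbours_plus:
  "(\<Sum>i\<in>neighbours E' k. f i)
    = (\<Sum>i\<in>neighbours E k. f i) + (if k = u then f v else 0) + (if k = v then f u else 0)"
proof -
  have "v \<notin> neighbours E u" "u \<notin> neighbours E v"
    using not_adj_uv by (auto simp: neighbours_def adj_commute)
  moreover have "neighbours E' k = neighbours E k \<union> (if k = u then {v} else {}) \<union> (if k = v then {u} else {})"
    unfolding neighbours_def adj_plus_iff by (auto simp: doubleton_eq_iff)
  ultimately show ?thesis using uv finite_neighbours by (cases "k = u"; cases "k = v") (auto simp: add.commute)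
qed

lemma degree_plus:
  "real (degree E' k) = real (degree E k) + (if k = u then 1 else 0) + (if k = v then 1 else 0)"
  using sum_neighbours_plus[of "\<lambda>_. 1::real" k] by (simp add: degree_eq_card_neighbours)

text \<open>A cycle must use the new edge; rotated to end there, it is a path of the tree from \<open>u\<close> to \<open>v\<close>.\<close>
lemma cycle_length:
  assumes xsV: "set xs \<subseteq> V" and cyc: "is_cycle E' xs"
  shows "length xs = \<delta> u v + 1"
proof -
  let ?L = "length xs"
  obtain i where i: "i < ?L" "{xs ! i, xs ! ((i + 1) mod ?L)} = {u, v}"
  proof (rule ccontr)
    assume "\<not> thesis"
    then have "is_cycle E xs" using cyc that unfolding is_cycle_def adj_plus_iff by blast
    then show False using acyclic xsV by blast
  qed
  then obtain ys where ys: "is_cycle E' ys" "set ys = set xs" "length ys = ?L"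
    "hd ys = xs ! ((i + 1) mod ?L)" "last ys = xs ! i"
    using is_cycle_rotate_to[OF cyc] by blast
  have ends: "{hd ys, last ys} = {u, v}" using i(2) ys(4,5) by (simp add: insert_commute)
  have walk: "walk E ys"
    by (rule is_cycle_open_walk[OF ys(1)]) (use ends in \<open>auto simp: adj_plus_iff\<close>)
  have distinct: "distinct ys" and "ys \<noteq> []" using ys(1) by (auto simp: is_cycle_def)
  then have "hd ys \<in> V" using ys(2) xsV hd_in_set[of ys] by blast
  then have "length ys = \<delta> (hd ys) (last ys) + 1" by (rule path_length_eq_graph_dist[OF walk distinct])
  moreover have "\<delta> (hd ys) (last ys) = \<delta> u v"
    using ends graph_dist_commute[OF vV uV] unfolding doubleton_eq_iff by (elim disjE) simp_all
  ultimately show ?thesis using ys(3) by simp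
qed

definition girth :: real where
  "girth = real (\<delta> u v) + 1"

definition phi :: "'a \<Rightarrow> real" where
  "phi x = (real (\<delta> x v) - real (\<delta> x u)) / 2"

text \<open>The effective resistance of the unicyclic graph \<open>E'\<close>: the tree distance corrected by the
  parallel path through the new edge; \<open>phi\<close> measures the position along the cycle.\<close>
definition resistance :: "'a \<Rightarrow> 'a \<Rightarrow> real" where
  "resistance x y = real (\<delta> x y) - (phi x - phi y)\<^sup>2 / girth"

definition alpha :: "'a \<Rightarrow> real" where
  "alpha j = 2 - real (degree E j)
    - (real (degree E j) * (phi j)\<^sup>2 - (\<Sum>i\<in>neighbours E j. (phi i)\<^sup>2)) / girth"

lemma girth_pos: "0 < girth"
  unfolding girth_def by simp

lemma phi_u: "phi u = (girth - 1) / 2"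
  unfolding phi_def girth_def by simp

lemma phi_v: "phi v = - (girth - 1) / 2"
  unfolding phi_def girth_def using graph_dist_commute[OF uV vV] by simp

lemma sum_neighbours_phi:
  assumes "j \<in> V"
  shows "(\<Sum>i\<in>neighbours E j. phi i)
    = real (degree E j) * phi j - (if j = u then 1 else 0) + (if j = v then 1 else 0)"
proof -
  have "(\<Sum>i\<in>neighbours E j. phi i)
      = ((\<Sum>i\<in>neighbours E j. real (\<delta> i v)) - (\<Sum>i\<in>neighbours E j. real (\<delta> i u))) / 2"
    unfolding phi_def sum_divide_distrib[symmetric] sum_subtractf ..
  then show ?thesis
    unfolding sum_neighbours_graph_dist[OF assms uV] sum_neighbours_graph_dist[OF assms vV]
    using uv by (auto simp: phi_def field_simps)
qed

lemma resistance_v_eq: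
  assumes "l \<in> V"
  shows "resistance v l = resistance u l + 2 * phi l / girth"
proof -
  have "real (\<delta> v l) - real (\<delta> u l) = 2 * phi l"
    unfolding phi_def using graph_dist_commute assms uV vV by simp
  then show ?thesis
    unfolding resistance_def phi_u phi_v using girth_pos
    by (simp add: field_simps power2_eq_square)
qed

lemma sum_neighbours_resistance:
  assumes jV: "j \<in> V" and lV: "l \<in> V"
  shows "(\<Sum>i\<in>neighbours E j. resistance i l) = real (degree E j) * resistance j l - alpha j
    + (if j = l then 2 else 0) - 2 * phi l * ((if j = u then 1 else 0) - (if j = v then 1 else 0)) / girth"
proof -
  let ?d = "real (degree E j)"
  have "(\<Sum>i\<in>neighbours E j. (phi i - phi l)\<^sup>2)
      = (\<Sum>i\<in>neighbours E j. (phi i)\<^sup>2) - 2 * phi l * (\<Sum>i\<in>neighbours E j. phi i) + ?d * (phi l)\<^sup>2"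
    by (simp add: power2_diff sum.distrib sum_subtractf sum_distrib_left degree_eq_card_neighbours
        algebra_simps)
  then have "(\<Sum>i\<in>neighbours E j. resistance i l)
      = ?d * real (\<delta> j l) + ?d - 2 + (if j = l then 2 else 0)
        - ((\<Sum>i\<in>neighbours E j. (phi i)\<^sup>2) - 2 * phi l * (?d * phi j - (if j = u then 1 else 0)
            + (if j = v then 1 else 0)) + ?d * (phi l)\<^sup>2) / girth"
    unfolding resistance_def sum_subtractf sum_divide_distrib[symmetric]
    using sum_neighbours_graph_dist[OF jV lV] sum_neighbours_phi[OF jV] by simp
  moreover have "(d * D + d - 2 + e) - (P - 2 * pl * (d * pj - a + b) + d * pl\<^sup>2) / girth
      = d * (D - (pj - pl)\<^sup>2 / girth) - (2 - d - (d * pj\<^sup>2 - P) / girth) + e - 2 * pl * (a - b) / girth"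
    for d D e P pl pj a b :: real
    using girth_pos by (simp add: field_simps power2_eq_square)
  ultimately show ?thesis unfolding resistance_def alpha_def by simp
qed

lemma resistance_laplacian:
  assumes jV: "j \<in> V" and lV: "l \<in> V"
  shows "(\<Sum>i\<in>neighbours E' j. resistance i l)
    = real (degree E' j) * resistance j l - alpha j + (if j = l then 2 else 0)"
  using sum_neighbours_resistance[OF assms] resistance_v_eq[OF lV] uv
  unfolding sum_neighbours_plus degree_plus
  by (cases "j = u"; cases "j = v") (simp_all add: distrib_right)

lemma sum_degree_plus: "(\<Sum>k\<in>V. real (degree E' k)) = 2 * real (card V)"
  using sum_degree uV vV finite_vertices by (simp add: degree_plus sum.distrib)

lemma kemeny_tree_eq:
  "kemeny V E = (\<Sum>k\<in>V. \<Sum>l\<in>V. real (degree E k) * real (degree E l) * real (\<delta> k l))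
    / (4 * (real (card V) - 1))"
proof -
  interpret T: nontrivial_graph V E by (rule nontrivial_tree)
  have "kemeny V E = (\<Sum>k\<in>V. \<Sum>l\<in>V. real (degree E k) * real (degree E l) * real (\<delta> k l))
    / (2 * (\<Sum>x\<in>V. real (degree E x)))"
    by (rule T.kemeny_eq_resistance_formula[where \<alpha> = "\<lambda>j. 2 - real (degree E j)"])
      (simp_all add: sum_neighbours_graph_dist)
  then show ?thesis by (simp add: sum_degree)
qed

lemma kemeny_plus_eq:
  "kemeny V E' = (\<Sum>k\<in>V. \<Sum>l\<in>V. real (degree E' k) * real (degree E' l) * resistance k l)
    / (4 * real (card V))"
proof -
  interpret G: nontrivial_graph V E' by (rule nontrivial_plus)
  have "kemeny V E' = (\<Sum>k\<in>V. \<Sum>l\<in>V. real (degree E' k) * real (degree E' l) * resistance k l)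
    / (2 * (\<Sum>x\<in>V. real (degree E' x)))"
  proof (rule G.kemeny_eq_resistance_formula[where \<alpha> = alpha])
    show "resistance x x = 0" for x by (simp add: resistance_def)
  qed (rule resistance_laplacian)
  then show ?thesis by (simp add: sum_degree_plus)
qed

text \<open>In a tree, \<open>height x\<close> is the distance from \<open>x\<close> to the path between \<open>u\<close> and \<open>v\<close>.\<close>
definition height :: "'a \<Rightarrow> nat" where
  "height x = (\<delta> x u + \<delta> x v - \<delta> u v) div 2"

lemma real_height:
  assumes xV: "x \<in> V"
  shows "real (height x) = (real (\<delta> x u) + real (\<delta> x v) - real (\<delta> u v)) / 2"
proof -
  have "\<delta> u v \<le> \<delta> x u + \<delta> x v"
    using graph_dist_triangle[OF uV xV vV] graph_dist_commute[OF uV xV] by simp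
  moreover have "even (\<delta> x u + \<delta> x v - \<delta> u v)"
    using graph_dist_parity[OF uV vV xV] calculation by (simp add: even_diff_nat)
  then obtain m where m: "\<delta> x u + \<delta> x v - \<delta> u v = 2 * m" by (blast elim: evenE)
  ultimately show ?thesis unfolding height_def
    using arg_cong[OF m, of real] by (simp add: of_nat_diff)
qed

lemma height_u: "height u = 0"
  unfolding height_def by simp

lemma height_closer_neighbour:
  assumes xV: "x \<in> V" and "adj E x y" and "\<delta> y u + 1 = \<delta> x u"
  shows "height y = height x \<or> height y + 1 = height x"
proof -
  have yV: "y \<in> V" using adjD assms(2) by auto
  have "real (\<delta> x u) = real (\<delta> y u) + 1" by (subst assms(3)[symmetric]) simp
  moreover have "real (\<delta> y v) = real (\<delta> x v) + 1 \<or> real (\<delta> x v) = real (\<delta> y v) + 1"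
    using adj_graph_dist_cases[OF assms(2) vV] by auto
  ultimately have "real (height y) = real (height x) \<or> real (height y) + 1 = real (height x)"
    unfolding real_height[OF xV] real_height[OF yV] by (auto simp: field_simps)
  then show ?thesis by (metis of_nat_1 of_nat_add of_nat_eq_iff)
qed

lemma height_intermediate:
  "x \<in> V \<Longrightarrow> 1 \<le> j \<Longrightarrow> j \<le> height x \<Longrightarrow> \<exists>y\<in>V. height y = j"
proof (induction "\<delta> x u" arbitrary: x)
  case 0
  then show ?case using graph_dist_eq_0_iff uV height_u by auto
next
  case (Suc m)
  show ?case
  proof (cases "j = height x")
    case False
    from Suc obtain y where y: "adj E x y" "\<delta> y u + 1 = \<delta> x u"
      using closer_neighbour_exists uV by force
    then have "j \<le> height y" using height_closer_neighbour[OF Suc.prems(1) y] False Suc.prems(3) by auto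
    then show ?thesis using Suc.hyps(1)[of y] Suc.hyps(2) y adjD[OF y(1)] Suc.prems(2) by auto
  qed (use Suc.prems in blast)
qed

definition uv_path :: "'a list" where
  "uv_path = (SOME g. walk E g \<and> hd g = u \<and> last g = v \<and> length g = \<delta> u v + 1)"

lemma uv_path: "walk E uv_path" "hd uv_path = u" "last uv_path = v" "length uv_path = \<delta> u v + 1"
proof -
  have "\<exists>g. walk E g \<and> hd g = u \<and> last g = v \<and> length g = \<delta> u v + 1"
    using shortest_walk_exists uV vV by blast
  then have "walk E uv_path \<and> hd uv_path = u \<and> last uv_path = v \<and> length uv_path = \<delta> u v + 1"
    unfolding uv_path_def by (rule someI_ex)
  then show "walk E uv_path" "hd uv_path = u" "last uv_path = v" "length uv_path = \<delta> u v + 1"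
    by auto
qed

lemma distinct_uv_path: "distinct uv_path"
  using shortest_walk_distinct[OF uv_path uV] .

lemma uv_path_nth:
  assumes "i < length uv_path"
  shows "\<delta> (uv_path ! i) u = i" "\<delta> (uv_path ! i) v = \<delta> u v - i" "uv_path ! i \<in> V"
proof -
  show iV: "uv_path ! i \<in> V" using shortest_walk_nth(3)[OF uv_path uV assms] .
  show "\<delta> (uv_path ! i) u = i"
    using shortest_walk_nth(1)[OF uv_path uV assms] graph_dist_commute[OF uV iV] by simp
  show "\<delta> (uv_path ! i) v = \<delta> u v - i" using shortest_walk_nth(2)[OF uv_path uV assms] .
qed

lemma set_uv_path_subset: "set uv_path \<subseteq> V"
  using uv_path_nth by (auto simp: in_set_conv_nth)

lemma height_uv_path: "x \<in> set uv_path \<Longrightarrow> height x = 0"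
  using uv_path_nth uv_path(4) unfolding height_def by (auto simp: in_set_conv_nth)

lemma phi_uv_path:
  assumes "i < length uv_path"
  shows "phi (uv_path ! i) = real (\<delta> u v) / 2 - real i"
  using uv_path_nth[OF assms] assms uv_path(4) unfolding phi_def by (simp add: of_nat_diff field_simps)

lemma sum_uv_path: "(\<Sum>y\<in>set uv_path. f y) = (\<Sum>i<\<delta> u v + 1. f (uv_path ! i))"
  using sum.reindex_bij_betw[OF bij_betw_nth[OF distinct_uv_path refl refl], of f] uv_path(4)
  by (simp add: atLeast0LessThan)

lemma card_off_path: "card (V - set uv_path) = card V - (\<delta> u v + 1)"
  using card_Diff_subset[OF _ set_uv_path_subset] distinct_card[OF distinct_uv_path] uv_path(4)
  by simp

lemma girth_le_card: "girth \<le> real (card V)"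
  using card_mono[OF finite_vertices set_uv_path_subset] distinct_card[OF distinct_uv_path] uv_path(4)
  unfolding girth_def by simp

text \<open>The heights \<open>1, \<dots>, k - 1\<close> are all attained off the path, by vertices other than those
  of height at least \<open>k\<close>.\<close>
lemma card_height_ge:
  assumes k: "1 \<le> k" and ne: "{x \<in> V. k \<le> height x} \<noteq> {}"
  shows "card {x \<in> V. k \<le> height x} + (k - 1) \<le> card (V - set uv_path)"
proof -
  define A where "A = {x \<in> V. k \<le> height x}"
  define B where "B = {y \<in> V. 1 \<le> height y \<and> height y < k}"
  obtain x0 where x0: "x0 \<in> V" "k \<le> height x0" using ne by auto
  have "{1..<k} \<subseteq> height ` B"
  proof
    fix j assume j: "j \<in> {1..<k}"
    then obtain y where "y \<in> V" "height y = j" using height_intermediate[OF x0(1), of j] x0 by auto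
    then show "j \<in> height ` B" unfolding B_def using j by auto
  qed
  moreover have fB: "finite B" unfolding B_def using finite_vertices by simp
  ultimately have "k - 1 \<le> card B"
    using card_mono[OF finite_imageI[OF fB]] card_image_le[OF fB, of height] by fastforce
  moreover have "finite A" "A \<inter> B = {}" unfolding A_def B_def using finite_vertices by auto
  moreover have "A \<union> B \<subseteq> V - set uv_path" unfolding A_def B_def using height_uv_path k by fastforce
  ultimately show ?thesis
    using card_Un_disjoint[OF _ fB] card_mono[of "V - set uv_path" "A \<union> B"] finite_vertices
    unfolding A_def by fastforce
qed

lemma height_le_card: "x \<in> V \<Longrightarrow> height x \<le> card (V - set uv_path)"
  using card_height_ge[of "height x"] card_gt_0_iff[of "{y \<in> V. height x \<le> height y}"] finite_vertices
  by (cases "height x = 0") fastforce+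

lemma sum_sum_min_height_le:
  defines "L \<equiv> card (V - set uv_path)"
  shows "(\<Sum>x\<in>V. \<Sum>y\<in>V. real (min (height x) (height y))) - (\<Sum>x\<in>V. real (height x))
    \<le> (real L ^ 3 - real L) / 3"
proof -
  define G where "G k = card {x \<in> V. k \<le> height x}" for k
  have "real (G k) ^ 2 - real (G k) \<le> real ((L + 1 - k) * (L - k))" if k: "k \<in> {1..L}" for k
  proof (cases "G k = 0")
    case False
    then have "{x \<in> V. k \<le> height x} \<noteq> {}" unfolding G_def by (auto simp: card_gt_0_iff)
    then have "G k + (k - 1) \<le> L" unfolding G_def L_def using card_height_ge k by simp
    then have "G k * (G k - 1) \<le> (L + 1 - k) * (L - k)" by (intro mult_le_mono) auto
    moreover have "real (G k) ^ 2 - real (G k) = real (G k * (G k - 1))"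
      using False by (simp add: of_nat_diff power2_eq_square algebra_simps)
    ultimately show ?thesis by linarith
  qed simp
  then have "(\<Sum>k\<in>{1..L}. real (G k) ^ 2) - (\<Sum>k\<in>{1..L}. real (G k))
      \<le> (\<Sum>k\<in>{1..L}. real ((L + 1 - k) * (L - k)))"
    unfolding sum_subtractf[symmetric] by (rule sum_mono)
  also have "\<dots> = (\<Sum>j<L. real ((L - j) * (L - Suc j)))"
    by (simp add: sum.atLeast1_atMost_eq)
  also have "\<dots> = (\<Sum>j<L. real (L - Suc j) * (real (L - Suc j) + 1))"
    by (intro sum.cong refl) (auto simp: of_nat_diff)
  also have "\<dots> = (real L ^ 3 - real L) / 3"
    using sum.nat_diff_reindex[of "\<lambda>j. real j * (real j + 1)" L] sum_lessThan_of_nat_times_Suc by simp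
  finally have "(\<Sum>k\<in>{1..L}. real (G k) ^ 2) - (\<Sum>k\<in>{1..L}. real (G k)) \<le> (real L ^ 3 - real L) / 3" .
  moreover have "(\<Sum>x\<in>V. \<Sum>y\<in>V. real (min (height x) (height y))) = (\<Sum>k\<in>{1..L}. real (G k) ^ 2)"
    unfolding G_def L_def by (rule sum_sum_min_eq_sum_level_sets[OF finite_vertices height_le_card])
  moreover have "(\<Sum>x\<in>V. real (height x)) = (\<Sum>k\<in>{1..L}. real (G k))"
    unfolding G_def L_def by (rule sum_eq_sum_level_sets[OF finite_vertices height_le_card])
  ultimately show ?thesis by simp
qed

lemma height_phi_diff_le:
  assumes xV: "x \<in> V" and yV: "y \<in> V"
  shows "\<bar>real (height x) - real (height y)\<bar> + \<bar>phi x - phi y\<bar> \<le> real (\<delta> x y)"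
proof -
  let ?a = "real (\<delta> x v) - real (\<delta> y v)" and ?b = "real (\<delta> x u) - real (\<delta> y u)"
  have "\<bar>?a\<bar> \<le> real (\<delta> x y)" "\<bar>?b\<bar> \<le> real (\<delta> x y)"
    using graph_dist_triangle[OF xV yV vV] graph_dist_triangle[OF yV xV vV]
      graph_dist_triangle[OF xV yV uV] graph_dist_triangle[OF yV xV uV]
      graph_dist_commute[OF xV yV] by linarith+
  moreover have "real (height x) - real (height y) = (?a + ?b) / 2" "phi x - phi y = (?a - ?b) / 2"
    unfolding real_height[OF xV] real_height[OF yV] phi_def by (simp_all add: field_simps)
  ultimately show ?thesis using abs_half_sum_plus_abs_half_diff[of ?a ?b] by simp
qed

lemma sum_sum_abs_phi_diff_ge:
  "(\<Sum>x\<in>V. \<Sum>y\<in>V. \<bar>phi x - phi y\<bar>)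
    \<ge> (girth ^ 3 - girth) / 3 + real (card (V - set uv_path)) * (girth\<^sup>2 - 1) / 2"
proof -
  let ?s = "\<delta> u v + 1"
  have girth: "girth = real ?s" unfolding girth_def by simp
  have "(\<Sum>x\<in>set uv_path. \<Sum>y\<in>set uv_path. \<bar>phi x - phi y\<bar>) = (\<Sum>i<?s. \<Sum>j<?s. \<bar>real i - real j\<bar>)"
    unfolding sum_uv_path using uv_path(4) phi_uv_path by (intro sum.cong refl) (simp add: abs_minus_commute)
  also have "\<dots> = (girth ^ 3 - girth) / 3" unfolding girth by (rule sum_lessThan_abs_diff)
  finally have on_path: "(\<Sum>x\<in>set uv_path. \<Sum>y\<in>set uv_path. \<bar>phi x - phi y\<bar>) = (girth ^ 3 - girth) / 3" .
  have row: "(\<Sum>y\<in>set uv_path. \<bar>phi x - phi y\<bar>) = (\<Sum>i<?s. \<bar>(real (\<delta> u v) / 2 - phi x) - real i\<bar>)" for x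
    unfolding sum_uv_path
    by (intro sum.cong refl) (simp add: uv_path(4) phi_uv_path abs_minus_commute algebra_simps)
  have "(\<Sum>y\<in>set uv_path. \<bar>phi x - phi y\<bar>) \<ge> (girth\<^sup>2 - 1) / 4" for x
    unfolding row girth by (rule sum_lessThan_abs_dist_ge)
  then have "(\<Sum>x\<in>V - set uv_path. \<Sum>y\<in>set uv_path. \<bar>phi x - phi y\<bar>)
      \<ge> real (card (V - set uv_path)) * ((girth\<^sup>2 - 1) / 4)"
    using sum_mono[of "V - set uv_path" "\<lambda>_. (girth\<^sup>2 - 1) / 4"] by simp
  moreover have "(\<Sum>x\<in>V. \<Sum>y\<in>V. \<bar>phi x - phi y\<bar>) \<ge> (\<Sum>x\<in>set uv_path. \<Sum>y\<in>set uv_path. \<bar>phi x - phi y\<bar>)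
      + 2 * (\<Sum>x\<in>V - set uv_path. \<Sum>y\<in>set uv_path. \<bar>phi x - phi y\<bar>)"
    by (rule sum_sum_ge_block_sums[OF finite_vertices set_uv_path_subset]) (auto simp: abs_minus_commute)
  ultimately show ?thesis using on_path by linarith
qed

lemma degree_plus_ge:
  assumes kV: "k \<in> V"
  shows "real (degree E' k) \<ge> 1 + (if k \<in> set uv_path then 1 else 0)"
proof -
  have d1: "real (degree E k) \<ge> 1" using nontrivial_graph.degree_pos[OF nontrivial_tree kV] by simp
  show ?thesis
  proof (cases "k \<in> set uv_path \<and> k \<noteq> u \<and> k \<noteq> v")
    case True
    then obtain i where i: "i < length uv_path" "k = uv_path ! i" by (auto simp: in_set_conv_nth)
    have ne: "uv_path \<noteq> []" using uv_path(4) by auto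
    have "i \<noteq> 0" using True i uv_path(2) hd_conv_nth[OF ne] by metis
    moreover have "i \<noteq> length uv_path - 1" using True i uv_path(3) last_conv_nth[OF ne] by metis
    ultimately have i': "0 < i" "i + 1 < length uv_path" using i(1) by auto
    have "adj E (uv_path ! (i - 1)) k" "adj E k (uv_path ! (i + 1))"
      using uv_path(1) i i' unfolding walk_def by (metis Suc_diff_1 Suc_eq_plus1 less_imp_diff_less, simp)
    moreover have ne2: "uv_path ! (i - 1) \<noteq> uv_path ! (i + 1)"
      using distinct_uv_path i' by (simp add: nth_eq_iff_index_eq)
    ultimately have "card {uv_path ! (i - 1), uv_path ! (i + 1)} \<le> degree E k"
      unfolding degree_eq_card_neighbours
      by (intro card_mono finite_neighbours) (auto simp: neighbours_def adj_commute)
    then show ?thesis using True degree_plus[of k] ne2 by auto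
  qed (use d1 degree_plus[of k] uv in auto)
qed

lemma sum_sum_degree_plus_phi_diff_ge:
  "(\<Sum>k\<in>V. \<Sum>l\<in>V. real (degree E' k) * real (degree E' l) * (phi k - phi l)\<^sup>2)
    \<ge> (2/3) * real (card V) * girth * (girth\<^sup>2 - 1)"
proof -
  let ?w = "\<lambda>k. real (degree E' k)"
  define m where "m = (\<Sum>k\<in>V. ?w k * phi k) / (\<Sum>k\<in>V. ?w k)"
  have W: "(\<Sum>k\<in>V. ?w k) = 2 * real (card V)" by (rule sum_degree_plus)
  have "(\<Sum>k\<in>set uv_path. (phi k - m)\<^sup>2) = (\<Sum>i<\<delta> u v + 1. ((real (\<delta> u v) / 2 - m) - real i)\<^sup>2)"
    unfolding sum_uv_path by (intro sum.cong refl) (simp add: uv_path(4) phi_uv_path algebra_simps)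
  moreover have "girth = real (\<delta> u v + 1)" unfolding girth_def by simp
  ultimately have path: "(\<Sum>k\<in>set uv_path. (phi k - m)\<^sup>2) \<ge> girth * (girth\<^sup>2 - 1) / 12"
    using sum_lessThan_square_dist_ge by presburger
  have "(\<Sum>k\<in>V. (1 + (if k \<in> set uv_path then 1 else 0)) * (phi k - m)\<^sup>2) \<le> (\<Sum>k\<in>V. ?w k * (phi k - m)\<^sup>2)"
    by (intro sum_mono mult_right_mono degree_plus_ge) auto
  moreover have "(\<Sum>k\<in>V. (1 + (if k \<in> set uv_path then 1 else 0)) * (phi k - m)\<^sup>2) = (\<Sum>k\<in>V. (phi k - m)\<^sup>2) + (\<Sum>k\<in>V. if k \<in> set uv_path then (phi k - m)\<^sup>2 else 0)"
    unfolding sum.distrib[symmetric] by (intro sum.cong) auto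
  moreover have "(\<Sum>k\<in>V. if k \<in> set uv_path then (phi k - m)\<^sup>2 else 0) = (\<Sum>k\<in>set uv_path. (phi k - m)\<^sup>2)"
    using sum.inter_restrict[OF finite_vertices, of "\<lambda>k. (phi k - m)\<^sup>2" "set uv_path"] set_uv_path_subset
    by (simp add: Int_absorb1)
  moreover have "(\<Sum>k\<in>V. (phi k - m)\<^sup>2) \<ge> (\<Sum>k\<in>set uv_path. (phi k - m)\<^sup>2)"
    using finite_vertices set_uv_path_subset by (intro sum_mono2) auto
  ultimately have "(\<Sum>k\<in>V. ?w k * (phi k - m)\<^sup>2) \<ge> girth * (girth\<^sup>2 - 1) / 6" using path by linarith
  then have "4 * real (card V) * (\<Sum>k\<in>V. ?w k * (phi k - m)\<^sup>2) \<ge> 4 * real (card V) * (girth * (girth\<^sup>2 - 1) / 6)"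
    by (rule mult_left_mono) simp
  moreover have "(\<Sum>k\<in>V. \<Sum>l\<in>V. ?w k * ?w l * (phi k - phi l)\<^sup>2) = 2 * (2 * real (card V)) * (\<Sum>k\<in>V. ?w k * (phi k - m)\<^sup>2)"
    using sum_sum_weighted_square_diff[where A = V and w = ?w and x = phi] card_ge_2
    unfolding m_def W by simp
  ultimately show ?thesis by (simp add: algebra_simps)
qed

lemma sum_sum_degree_mult_graph_dist:
  "(\<Sum>k\<in>V. \<Sum>l\<in>V. real (degree E k) * real (degree E l) * real (\<delta> k l))
    = 4 * (\<Sum>k\<in>V. \<Sum>l\<in>V. real (\<delta> k l)) - 2 * real (card V) * (real (card V) - 1)
      - 2 * (real (card V) - 1)\<^sup>2"
proof -
  let ?d = "\<lambda>k. real (degree E k)" and ?n = "real (card V)"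
  let ?\<sigma> = "\<lambda>l. \<Sum>k\<in>V. real (\<delta> k l)"
  have row: "(\<Sum>k\<in>V. ?d k * real (\<delta> k l)) = 2 * ?\<sigma> l - (?n - 1)" if "l \<in> V" for l
    using sum_degree_mult_graph_dist[OF that] by simp
  have "(\<Sum>l\<in>V. ?d l * ?\<sigma> l) = (\<Sum>l\<in>V. \<Sum>k\<in>V. ?d l * real (\<delta> l k))"
    unfolding sum_distrib_left using graph_dist_commute by (intro sum.cong refl) auto
  also have "\<dots> = (\<Sum>k\<in>V. \<Sum>l\<in>V. ?d l * real (\<delta> l k))" by (rule sum.swap)
  also have "\<dots> = (\<Sum>k\<in>V. 2 * ?\<sigma> k - (?n - 1))" using row by simp
  finally have col: "(\<Sum>l\<in>V. ?d l * ?\<sigma> l) = 2 * (\<Sum>k\<in>V. ?\<sigma> k) - ?n * (?n - 1)"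
    by (simp add: sum_subtractf sum_distrib_left)
  have "(\<Sum>k\<in>V. \<Sum>l\<in>V. ?d k * ?d l * real (\<delta> k l)) = (\<Sum>l\<in>V. ?d l * (\<Sum>k\<in>V. ?d k * real (\<delta> k l)))"
    by (subst sum.swap) (simp add: sum_distrib_left algebra_simps)
  also have "\<dots> = (\<Sum>l\<in>V. 2 * (?d l * ?\<sigma> l) - (?n - 1) * ?d l)"
    by (intro sum.cong refl) (simp add: row algebra_simps)
  also have "\<dots> = 2 * (\<Sum>l\<in>V. ?d l * ?\<sigma> l) - (?n - 1) * (\<Sum>l\<in>V. ?d l)"
    by (simp add: sum_subtractf sum_distrib_left)
  also have "\<dots> = 4 * (\<Sum>k\<in>V. ?\<sigma> k) - 2 * ?n * (?n - 1) - 2 * (?n - 1)\<^sup>2"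
    unfolding col sum_degree by (simp add: power2_eq_square algebra_simps)
  finally have "(\<Sum>k\<in>V. \<Sum>l\<in>V. ?d k * ?d l * real (\<delta> k l))
      = 4 * (\<Sum>k\<in>V. ?\<sigma> k) - 2 * ?n * (?n - 1) - 2 * (?n - 1)\<^sup>2" .
  moreover have "(\<Sum>k\<in>V. ?\<sigma> k) = (\<Sum>k\<in>V. \<Sum>l\<in>V. real (\<delta> k l))" by (rule sum.swap)
  ultimately show ?thesis by simp
qed

lemma sum_graph_dist_u_plus_v:
  "(\<Sum>x\<in>V. real (\<delta> x u)) + (\<Sum>x\<in>V. real (\<delta> x v))
    = 2 * (\<Sum>x\<in>V. real (height x)) + real (card V) * (girth - 1)"
proof -
  have "(\<Sum>x\<in>V. real (\<delta> x u)) + (\<Sum>x\<in>V. real (\<delta> x v)) = (\<Sum>x\<in>V. 2 * real (height x) + (girth - 1))"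
    unfolding sum.distrib[symmetric] by (intro sum.cong refl) (simp add: girth_def real_height field_simps)
  then show ?thesis by (simp add: sum.distrib sum_distrib_left)
qed

lemma kemeny_plus_eq_wiener:
  defines "n \<equiv> real (card V)"
  shows "kemeny V E' = (4 * (\<Sum>k\<in>V. \<Sum>l\<in>V. real (\<delta> k l)) + 8 * (\<Sum>x\<in>V. real (height x))
    - 2 * n * (n - 1) - 2 * (n - 1)\<^sup>2 + 4 * n * (girth - 1) - 4 * (n - 1) + 2 * (girth - 1)
    - (\<Sum>k\<in>V. \<Sum>l\<in>V. real (degree E' k) * real (degree E' l) * (phi k - phi l)\<^sup>2) / girth) / (4 * n)"
proof -
  let ?d = "\<lambda>k. real (degree E k)"
  have "(\<Sum>k\<in>V. \<Sum>l\<in>V. real (degree E' k) * real (degree E' l) * resistance k l)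
      = (\<Sum>k\<in>V. \<Sum>l\<in>V. real (degree E' k) * real (degree E' l) * real (\<delta> k l))
        - (\<Sum>k\<in>V. \<Sum>l\<in>V. real (degree E' k) * real (degree E' l) * (phi k - phi l)\<^sup>2) / girth"
    unfolding resistance_def by (simp add: right_diff_distrib sum_subtractf sum_divide_distrib)
  moreover have "(\<Sum>k\<in>V. \<Sum>l\<in>V. real (degree E' k) * real (degree E' l) * real (\<delta> k l))
      = (\<Sum>k\<in>V. \<Sum>l\<in>V. ?d k * ?d l * real (\<delta> k l)) + 2 * (\<Sum>k\<in>V. ?d k * real (\<delta> k u))
        + 2 * (\<Sum>k\<in>V. ?d k * real (\<delta> k v)) + 2 * real (\<delta> u v)"
  proof -
    have "real (degree E' k) = ?d k + ((if k = u then 1 else 0) + (if k = v then 1 else 0))" for k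
      using degree_plus[of k] by simp
    then show ?thesis
      using sum_sum_add_indicator_weights[OF finite_vertices uV vV uv, of "\<lambda>k l. real (\<delta> k l)" ?d]
      by (simp add: graph_dist_commute)
  qed
  moreover have "real (\<delta> u v) = girth - 1" unfolding girth_def by simp
  ultimately show ?thesis
    unfolding kemeny_plus_eq sum_sum_degree_mult_graph_dist sum_degree_mult_graph_dist[OF uV]
      sum_degree_mult_graph_dist[OF vV] n_def
    using sum_graph_dist_u_plus_v by (simp add: algebra_simps)
qed

lemma sum_sum_graph_dist_ge:
  defines "L \<equiv> real (card (V - set uv_path))"
  shows "(\<Sum>k\<in>V. \<Sum>l\<in>V. real (\<delta> k l)) \<ge> 2 * (real (card V) - 1) * (\<Sum>x\<in>V. real (height x))
    - 2 * (L ^ 3 - L) / 3 + (girth ^ 3 - girth) / 3 + L * (girth\<^sup>2 - 1) / 2"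
proof -
  let ?h = "\<lambda>x. real (height x)" and ?H = "\<Sum>x\<in>V. real (height x)"
  have "(\<Sum>k\<in>V. \<Sum>l\<in>V. real (\<delta> k l))
      \<ge> (\<Sum>k\<in>V. \<Sum>l\<in>V. \<bar>?h k - ?h l\<bar>) + (\<Sum>k\<in>V. \<Sum>l\<in>V. \<bar>phi k - phi l\<bar>)"
    unfolding sum.distrib[symmetric] using height_phi_diff_le by (intro sum_mono) auto
  moreover have "(\<Sum>k\<in>V. \<Sum>l\<in>V. \<bar>?h k - ?h l\<bar>)
      = 2 * real (card V) * ?H - 2 * (\<Sum>k\<in>V. \<Sum>l\<in>V. real (min (height k) (height l)))"
  proof -
    have "(\<Sum>k\<in>V. \<Sum>l\<in>V. \<bar>?h k - ?h l\<bar>)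
        = (\<Sum>k\<in>V. \<Sum>l\<in>V. ?h k + ?h l - 2 * real (min (height k) (height l)))"
      by (intro sum.cong refl) (auto simp: min_def)
    then show ?thesis by (simp add: sum.distrib sum_subtractf sum_distrib_left[symmetric])
  qed
  moreover have "2 * (real (card V) - 1) * ?H = 2 * real (card V) * ?H - 2 * ?H"
    by (simp add: algebra_simps)
  ultimately show ?thesis
    using sum_sum_min_height_le sum_sum_abs_phi_diff_ge unfolding L_def by linarith
qed

text \<open>The estimates give \<open>2 n (n - 1) (kemeny V E - kemeny V E') \<ge> - p\<close>, where \<open>p\<close> is the cubic
  of the statement evaluated at the girth.\<close>
lemma kemeny_plus_less:
  defines "n \<equiv> real (card V)"
  assumes cubic: "- (girth ^ 3) - ((n\<^sup>2 - 10 * n) / 3) * girth\<^sup>2 - (2 * n\<^sup>2 + n) * girth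
      + (4 * n ^ 3 - 5 * n\<^sup>2 + 4 * n) / 3 < 0"
  shows "kemeny V E' < kemeny V E"
proof -
  define W where "W = (\<Sum>k\<in>V. \<Sum>l\<in>V. real (\<delta> k l))"
  define H where "H = (\<Sum>x\<in>V. real (height x))"
  define q where "q = (\<Sum>k\<in>V. \<Sum>l\<in>V. real (degree E' k) * real (degree E' l) * (phi k - phi l)\<^sup>2) / girth"
  define L where "L = n - girth"
  define A where "A = (L ^ 3 - L) / 3"
  define B where "B = (girth ^ 3 - girth) / 3 + L * (girth\<^sup>2 - 1) / 2"
  define C where "C = 2 * n * (n - 1) + 2 * (n - 1)\<^sup>2 + (n - 1) * (4 * n * (girth - 1) - 4 * (n - 1) + 2 * (girth - 1))"
  define T where "T = 4 * W - 2 * n * (n - 1) - 2 * (n - 1)\<^sup>2"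
  define G where "G = 4 * W + 8 * H - 2 * n * (n - 1) - 2 * (n - 1)\<^sup>2 + 4 * n * (girth - 1)
    - 4 * (n - 1) + 2 * (girth - 1) - q"
  have n2: "n \<ge> 2" unfolding n_def using card_ge_2 by simp
  have L_eq: "real (card (V - set uv_path)) = L"
    unfolding L_def n_def card_off_path using girth_le_card by (simp add: of_nat_diff girth_def)
  have W_ge: "W \<ge> 2 * ((n - 1) * H) - 2 * A + B"
    using sum_sum_graph_dist_ge[unfolded L_eq] mult.assoc[of 2 "n - 1" H]
    unfolding W_def H_def n_def A_def B_def by linarith
  have "q \<ge> (2/3) * n * (girth\<^sup>2 - 1)"
    using sum_sum_degree_plus_phi_diff_ge girth_pos unfolding q_def n_def
    by (simp add: field_simps power2_eq_square)
  then have q_ge: "(n - 1) * q \<ge> (n - 1) * ((2/3) * n * (girth\<^sup>2 - 1))"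
    using n2 by (intro mult_left_mono) auto
  define p where "p = - (girth ^ 3) - ((n\<^sup>2 - 10 * n) / 3) * girth\<^sup>2 - (2 * n\<^sup>2 + n) * girth
      + (4 * n ^ 3 - 5 * n\<^sup>2 + 4 * n) / 3"
  have "p < 0" using cubic unfolding p_def .
  then have "0 < - 2 * p" by simp
  also have "\<dots> = - 8 * A + 4 * B - C + (n - 1) * ((2/3) * n * (girth\<^sup>2 - 1))"
    unfolding p_def A_def B_def C_def L_def by (simp add: field_simps power2_eq_square power3_eq_cube)
  also have "\<dots> \<le> 4 * W - 8 * ((n - 1) * H) - C + (n - 1) * q"
    using W_ge q_ge by linarith
  also have "\<dots> = n * T - (n - 1) * G"
    unfolding G_def T_def C_def by (simp add: algebra_simps)
  finally have "(n - 1) * G < n * T" by simp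
  then have "G / (4 * n) < T / (4 * (n - 1))" using n2 by (simp add: field_simps)
  then show ?thesis
    unfolding kemeny_plus_eq_wiener kemeny_tree_eq sum_sum_degree_mult_graph_dist
      G_def T_def W_def H_def q_def n_def .
qed

end

lemma monic_neg_cubic_eventually_neg:
  fixes a2 a1 a0 x :: real
  shows "\<exists>y\<ge>x. - (y ^ 3) - a2 * y\<^sup>2 - a1 * y + a0 < 0"
proof (intro exI conjI)
  define y where "y = max x (\<bar>a2\<bar> + \<bar>a1\<bar> + \<bar>a0\<bar> + 1)"
  have y1: "1 \<le> y" unfolding y_def by linarith
  have sq1: "y \<le> y\<^sup>2" using mult_left_mono[OF y1, of y] y1 by (simp add: power2_eq_square)
  then have sq: "y \<le> y\<^sup>2" "1 \<le> y\<^sup>2" using y1 by linarith+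
  have "- a2 * y\<^sup>2 \<le> \<bar>a2\<bar> * y\<^sup>2" by (intro mult_right_mono) auto
  moreover have "- a1 * y \<le> \<bar>a1\<bar> * y\<^sup>2"
    using mult_right_mono[of "- a1" "\<bar>a1\<bar>" y] mult_left_mono[OF sq(1), of "\<bar>a1\<bar>"] y1 by force
  moreover have "a0 \<le> \<bar>a0\<bar> * y\<^sup>2" using mult_left_mono[OF sq(2), of "\<bar>a0\<bar>"] by simp
  ultimately have "- (y ^ 3) - a2 * y\<^sup>2 - a1 * y + a0 \<le> - (y ^ 3) + (\<bar>a2\<bar> + \<bar>a1\<bar> + \<bar>a0\<bar>) * y\<^sup>2"
    by (simp add: algebra_simps)
  also have "\<dots> < - (y ^ 3) + y * y\<^sup>2"
  proof (intro add_strict_left_mono mult_strict_right_mono)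
    show "\<bar>a2\<bar> + \<bar>a1\<bar> + \<bar>a0\<bar> < y" unfolding y_def by (simp add: less_max_iff_disj)
  qed (use y1 in simp)
  finally show "- (y ^ 3) - a2 * y\<^sup>2 - a1 * y + a0 < 0" by (simp add: power2_eq_square power3_eq_cube)
  show "x \<le> y" unfolding y_def by simp
qed

lemma cubic_neg_above_c0:
  fixes n :: nat and x :: real
  defines "f \<equiv> \<lambda>y. - (y ^ 3) - ((real n^2 - 10 * real n) / 3) * y ^ 2 - (2 * real n^2 + real n) * y
     + (4 * real n^3 - 5 * real n^2 + 4 * real n) / 3"
  assumes x: "x > cubic_c0 n" "x > 0"
  shows "f x < 0"
proof (rule ccontr)
  assume "\<not> f x < 0"
  moreover obtain y where "x \<le> y" "f y < 0"
    unfolding f_def using monic_neg_cubic_eventually_neg by blast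
  moreover have "isCont f z" for z unfolding f_def by (intro continuous_intros)
  ultimately obtain z where z: "x \<le> z" "f z = 0"
    using IVT2[of f y 0 x] by force
  define S where "S = {y. y > 0 \<and> f y = 0}"
  define a :: "nat \<Rightarrow> real" where "a i = [(4 * real n^3 - 5 * real n^2 + 4 * real n) / 3,
      - (2 * real n^2 + real n), - ((real n^2 - 10 * real n) / 3), -1] ! i" for i
  have f_poly: "f y = (\<Sum>i\<le>3. a i * y ^ i)" for y
    unfolding f_def a_def by (simp add: eval_nat_numeral algebra_simps power2_eq_square power3_eq_cube)
  have "finite S"
    by (rule finite_subset[OF _ polyfun_roots_finite[of a 3]]) (auto simp: S_def f_poly a_def)
  moreover have "z \<in> S" unfolding S_def using z x by auto
  ultimately have "z \<le> cubic_c0 n" unfolding cubic_c0_def S_def f_def by simp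
  then show False using x z by simp
qed

theorem corollary3p4:
  fixes V :: "'a set" and E :: "'a set set" and u v :: 'a and c :: nat
  assumes tree: "is_tree V E"
    and n4: "card V \<ge> 4"
    and diam: "real (diameter V E) \<ge> cubic_c0 (card V)"
    and uV: "u \<in> V" and vV: "v \<in> V" and uv: "u \<noteq> v" and nadj: "\<not> adj E u v"
    and cyc: "\<exists>xs. set xs \<subseteq> V \<and> is_cycle (insert {u, v} E) xs \<and> length xs = c"
    and cbig: "real c > cubic_c0 (card V)"
  shows "kemeny V (insert {u, v} E) < kemeny V E"
proof -
  interpret tree_plus_edge V E u v
    using tree uV vV uv nadj unfolding is_tree_def by unfold_locales auto
  obtain xs where xs: "set xs \<subseteq> V" "is_cycle (insert {u, v} E) xs" "length xs = c"
    using cyc by blast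
  have "girth = real c" using cycle_length[OF xs(1,2)] xs(3) unfolding girth_def by simp
  moreover have "0 < c" using xs(2,3) by (auto simp: is_cycle_def)
  ultimately show ?thesis using kemeny_plus_less cubic_neg_above_c0[OF cbig] by simp
qed

end
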